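(* Let $\xi_t$ ($|t|<T$) be a perturbed Delaunay potential on $D(0,\varepsilon)$ and $\Phi_t$ a family of solutions of $d\Phi_t=\Phi_t\xi_t$ on the universal cover of $D^*(0,\varepsilon)$, depending continuously on $(t,z,\lambda)$, solving the Monodromy Problem, and such that $\Phi_0(1,\cdot)$ is independent of $\lambda$. Let $H=\frac1{\sqrt2}\begin{pmatrix}1&1\\-1&1\end{pmatrix}$ and $Q=\mathrm{Uni}(\Phi_0(1)H)$. Then there exist a gauge $G(z)$ and a change of variable $h(z)$ with $h(0)=0$ such that $\widetilde\xi_t=(h^*\xi_t)\cdot G$ is a perturbed Delaunay potential (with residue $A_t$ at $z=0$) and $\widetilde\Phi_t=(h^*\Phi_t)G$ satisfies $\widetilde\Phi_0(1,\lambda)=QH^{-1}\in\Lambda SU(2)$.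
   Context: For $t\le\frac1{16}$ let $A_t(\lambda)=\begin{pmatrix}0&\lambda^{-1}r+s\\\lambda r+s&0\end{pmatrix}$ with $r+s=\frac12$, $rs=t$, $r<s$. Let $\mathbb A_\rho=\{1/\rho<|\lambda|<\rho\}$, $\rho>1$. A perturbed Delaunay potential is a family of DPW potentials $\xi_t(z,\lambda)=A_t(\lambda)\frac{dz}{z}+R_t(z,\lambda)dz$ with $R_t$ of class $C^2$ in $(t,z,\lambda)\in(-T,T)\times D(0,\varepsilon)\times\mathbb A_\rho$ for some $T,\varepsilon>0$ and $R_0=0$. A gauge is a map $G(z,\lambda)$ holomorphic in $z$ and in $\lambda$ on a disk $|\lambda|<\rho'$, $\rho'>1$, with values in $SL(2,\mathbb C)$ and $G(z,0)$ upper triangular; its action on a potential is $\xi\cdot G=G^{-1}\xi G+G^{-1}dG$. $h^*$ denotes pull-back by $h$. The Monodromy Problem: the monodromy $\mathcal M$ of $\Phi_t$ around the puncture satisfies $\mathcal M\in\Lambda SU(2)$, $\mathcal M(1)=\pm I_2$, $\partial_\lambda\mathcal M(1)=0$. $\mathrm{Uni}(\Phi)$ denotes the unitary factor $F\in\Lambda SU(2)$ of the Iwasawa decomposition $\Phi=FB$, $B$ holomorphic on the unit disk with $B(0)$ upper triangular with positive diagonal (for a constant matrix this is the QR decomposition, so $Q\in SU(2)$). *)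

theory Defs
  imports "HOL-Analysis.Analysis"
begin

type_synonym cmat = "complex^2^2"

definition mk2 :: "complex \<Rightarrow> complex \<Rightarrow> complex \<Rightarrow> complex \<Rightarrow> cmat" where
  "mk2 a b c d = vector [vector [a, b], vector [c, d]]"

definition msc :: "complex \<Rightarrow> cmat \<Rightarrow> cmat" where
  "msc c A = (\<chi> i j. c * A $ i $ j)"

definition conj_transpose :: "cmat \<Rightarrow> cmat" where
  "conj_transpose A = (\<chi> i j. cnj (A $ j $ i))"

definition SU2 :: "cmat set" where
  "SU2 = {A. A ** conj_transpose A = mat 1 \<and> det A = 1}"

definition mholo :: "(complex \<Rightarrow> cmat) \<Rightarrow> complex set \<Rightarrow> bool" where
  "mholo f S \<longleftrightarrow> (\<forall>i j. (\<lambda>x. f x $ i $ j) holomorphic_on S)"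

definition mhas_deriv :: "(complex \<Rightarrow> cmat) \<Rightarrow> cmat \<Rightarrow> complex \<Rightarrow> bool" where
  "mhas_deriv f D x \<longleftrightarrow> (\<forall>i j. ((\<lambda>y. f y $ i $ j) has_field_derivative (D $ i $ j)) (at x))"

definition C2_on :: "('a::real_normed_vector \<Rightarrow> 'b::real_normed_vector) \<Rightarrow> 'a set \<Rightarrow> bool" where
  "C2_on f U \<longleftrightarrow> (\<exists>D1 D2.
      (\<forall>x\<in>U. (f has_derivative blinfun_apply (D1 x)) (at x)) \<and>
      (\<forall>x\<in>U. (D1 has_derivative blinfun_apply (D2 x)) (at x)) \<and>
      continuous_on U D2)"

definition annulus :: "real \<Rightarrow> complex set" where
  "annulus \<rho> = {l. 1 / \<rho> < cmod l \<and> cmod l < \<rho>}"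

text \<open>Log coordinate w (z = exp w) on the universal cover of D*(0,eps).\<close>
definition logdisk :: "real \<Rightarrow> complex set" where
  "logdisk \<epsilon> = {w. Re w < ln \<epsilon>}"

text \<open>r < s with r + s = 1/2, r s = t.\<close>
definition rD :: "real \<Rightarrow> real" where "rD t = (1 - sqrt (1 - 16 * t)) / 4"
definition sD :: "real \<Rightarrow> real" where "sD t = (1 + sqrt (1 - 16 * t)) / 4"

definition DelA :: "real \<Rightarrow> complex \<Rightarrow> cmat" where
  "DelA t l = mk2 0 (inverse l * of_real (rD t) + of_real (sD t))
                   (l * of_real (rD t) + of_real (sD t)) 0"

text \<open>DPW potential xi(z,l) dz (coefficient of dz) on Omega, loops on the annulus.\<close>
definition DPW_pot :: "(complex \<Rightarrow> complex \<Rightarrow> cmat) \<Rightarrow> complex set \<Rightarrow> real \<Rightarrow> bool" where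
  "DPW_pot \<xi> \<Omega> \<rho> \<longleftrightarrow>
     (\<forall>l\<in>annulus \<rho>. mholo (\<lambda>z. \<xi> z l) \<Omega>) \<and>
     (\<forall>z\<in>\<Omega>. mholo (\<xi> z) (annulus \<rho>)) \<and>
     (\<forall>z\<in>\<Omega>. \<forall>l\<in>annulus \<rho>. \<xi> z l $ 1 $ 1 + \<xi> z l $ 2 $ 2 = 0) \<and>
     (\<forall>z\<in>\<Omega>. \<exists>F. mholo F (ball 0 \<rho>) \<and> (\<forall>l\<in>annulus \<rho>. F l = msc l (\<xi> z l)) \<and>
         F 0 $ 1 $ 1 = 0 \<and> F 0 $ 2 $ 1 = 0 \<and> F 0 $ 2 $ 2 = 0)"

definition pert_delaunay :: "(real \<Rightarrow> complex \<Rightarrow> complex \<Rightarrow> cmat) \<Rightarrow> real \<Rightarrow> real \<Rightarrow> real \<Rightarrow> bool" where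
  "pert_delaunay \<xi> T \<epsilon> \<rho> \<longleftrightarrow> 0 < T \<and> T \<le> 1/16 \<and> 0 < \<epsilon> \<and> 1 < \<rho> \<and>
     (\<exists>R. C2_on (\<lambda>(t, z, l). R t z l) ({-T<..<T} \<times> ball 0 \<epsilon> \<times> annulus \<rho>) \<and>
          (\<forall>z\<in>ball 0 \<epsilon>. \<forall>l\<in>annulus \<rho>. R 0 z l = 0) \<and>
          (\<forall>t\<in>{-T<..<T}. \<forall>z\<in>ball 0 \<epsilon> - {0}. \<forall>l\<in>annulus \<rho>.
              \<xi> t z l = msc (1 / z) (DelA t l) + R t z l)) \<and>
     (\<forall>t\<in>{-T<..<T}. DPW_pot (\<xi> t) (ball 0 \<epsilon> - {0}) \<rho>)"

text \<open>Family of solutions of d Phi_t = Phi_t xi_t on the universal cover (log coordinate),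
  with values in Lambda SL(2,C)_rho, continuous in (t,w,l).\<close>
definition sol_family :: "(real \<Rightarrow> complex \<Rightarrow> complex \<Rightarrow> cmat) \<Rightarrow> (real \<Rightarrow> complex \<Rightarrow> complex \<Rightarrow> cmat)
     \<Rightarrow> real \<Rightarrow> real \<Rightarrow> real \<Rightarrow> bool" where
  "sol_family \<xi> \<Phi> T \<epsilon> \<rho> \<longleftrightarrow>
     continuous_on ({-T<..<T} \<times> logdisk \<epsilon> \<times> annulus \<rho>) (\<lambda>(t, w, l). \<Phi> t w l) \<and>
     (\<forall>t\<in>{-T<..<T}. \<forall>l\<in>annulus \<rho>. \<forall>w\<in>logdisk \<epsilon>.
         mhas_deriv (\<lambda>w. \<Phi> t w l) (\<Phi> t w l ** msc (exp w) (\<xi> t (exp w) l)) w) \<and>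
     (\<forall>t\<in>{-T<..<T}. \<forall>w\<in>logdisk \<epsilon>. \<forall>l\<in>annulus \<rho>. det (\<Phi> t w l) = 1) \<and>
     (\<forall>t\<in>{-T<..<T}. \<forall>w\<in>logdisk \<epsilon>. mholo (\<Phi> t w) (annulus \<rho>))"

definition monodromy_problem :: "(complex \<Rightarrow> complex \<Rightarrow> cmat) \<Rightarrow> real \<Rightarrow> real \<Rightarrow> bool" where
  "monodromy_problem \<Phi>t \<epsilon> \<rho> \<longleftrightarrow> (\<exists>M :: complex \<Rightarrow> cmat.
     (\<forall>l\<in>annulus \<rho>. \<forall>w\<in>logdisk \<epsilon>. \<Phi>t (w + 2 * of_real pi * \<i>) l = M l ** \<Phi>t w l) \<and>
     (\<forall>l. cmod l = 1 \<longrightarrow> M l \<in> SU2) \<and>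
     (M 1 = mat 1 \<or> M 1 = - mat 1) \<and>
     (\<forall>i j. ((\<lambda>l. M l $ i $ j) has_field_derivative 0) (at 1)))"

text \<open>Value at the point z = 1 (w = 0) of the analytic continuation of a solution
  of d Phi = Phi A_0 dz/z (the t = 0 potential), as a function of l.\<close>
definition value_at_one :: "(complex \<Rightarrow> complex \<Rightarrow> cmat) \<Rightarrow> complex set \<Rightarrow> real \<Rightarrow> (complex \<Rightarrow> cmat) \<Rightarrow> bool" where
  "value_at_one \<Phi>0 L \<rho> C \<longleftrightarrow> (\<exists>\<Psi> :: complex \<Rightarrow> complex \<Rightarrow> cmat. \<forall>l\<in>annulus \<rho>.
      (\<forall>w. mhas_deriv (\<lambda>w. \<Psi> w l) (\<Psi> w l ** DelA 0 l) w) \<and>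
      (\<forall>w\<in>L. \<Psi> w l = \<Phi>0 w l) \<and> \<Psi> 0 l = C l)"

text \<open>Unitary factor of the Iwasawa (= QR) decomposition of a constant matrix.\<close>
definition Uni_const :: "cmat \<Rightarrow> cmat" where
  "Uni_const X = (THE Q. Q \<in> SU2 \<and> (\<exists>B. B $ 2 $ 1 = 0 \<and>
      Im (B $ 1 $ 1) = 0 \<and> 0 < Re (B $ 1 $ 1) \<and> Im (B $ 2 $ 2) = 0 \<and> 0 < Re (B $ 2 $ 2) \<and>
      X = Q ** B))"

definition Hmat :: cmat where
  "Hmat = msc (1 / of_real (sqrt 2)) (mk2 1 1 (-1) 1)"

definition change_of_var :: "(complex \<Rightarrow> complex) \<Rightarrow> real \<Rightarrow> real \<Rightarrow> bool" where
  "change_of_var h \<epsilon>' \<epsilon> \<longleftrightarrow> h holomorphic_on ball 0 \<epsilon>' \<and> inj_on h (ball 0 \<epsilon>') \<and>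
      h ` ball 0 \<epsilon>' \<subseteq> ball 0 \<epsilon> \<and> h 0 = 0"

definition is_lift :: "(complex \<Rightarrow> complex) \<Rightarrow> (complex \<Rightarrow> complex) \<Rightarrow> real \<Rightarrow> real \<Rightarrow> bool" where
  "is_lift hl h \<epsilon>' \<epsilon> \<longleftrightarrow> hl holomorphic_on logdisk \<epsilon>' \<and> hl ` logdisk \<epsilon>' \<subseteq> logdisk \<epsilon> \<and>
      (\<forall>w\<in>logdisk \<epsilon>'. exp (hl w) = h (exp w))"

definition is_gauge :: "(complex \<Rightarrow> complex \<Rightarrow> cmat) \<Rightarrow> real \<Rightarrow> real \<Rightarrow> bool" where
  "is_gauge G \<epsilon>' \<rho>' \<longleftrightarrow> 1 < \<rho>' \<and>
     (\<forall>l\<in>ball 0 \<rho>'. mholo (\<lambda>z. G z l) (ball 0 \<epsilon>')) \<and>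
     (\<forall>z\<in>ball 0 \<epsilon>'. mholo (G z) (ball 0 \<rho>')) \<and>
     (\<forall>z\<in>ball 0 \<epsilon>'. \<forall>l\<in>ball 0 \<rho>'. det (G z l) = 1) \<and>
     (\<forall>z\<in>ball 0 \<epsilon>'. G z 0 $ 2 $ 1 = 0)"

definition pullback :: "(complex \<Rightarrow> complex) \<Rightarrow> (complex \<Rightarrow> complex \<Rightarrow> cmat) \<Rightarrow> complex \<Rightarrow> complex \<Rightarrow> cmat" where
  "pullback h \<xi> z l = msc (deriv h z) (\<xi> (h z) l)"

definition gauge_act :: "(complex \<Rightarrow> complex \<Rightarrow> cmat) \<Rightarrow> (complex \<Rightarrow> complex \<Rightarrow> cmat) \<Rightarrow> complex \<Rightarrow> complex \<Rightarrow> cmat" where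
  "gauge_act \<xi> G z l = matrix_inv (G z l) ** \<xi> z l ** G z l
      + matrix_inv (G z l) ** (\<chi> i j. deriv (\<lambda>y. G y l $ i $ j) z)"

end

theory Submission
  imports Defs "HOL-Complex_Analysis.Cauchy_Integral_Formula"
begin

text \<open>At \<open>t = 0\<close> the potential is \<open>A0 dz/z\<close>, so \<open>\<Phi>\<^sub>0 = C0 exp (w A0)\<close> with \<open>z = e\<^sup>w\<close>.
  Write \<open>C0 H = Q B\<close> with \<open>Q \<in> SU(2)\<close> and \<open>B\<close> upper triangular with diagonal \<open>(\<beta>, 1/\<beta>)\<close> and
  upper right entry \<open>\<gamma>\<close>. Since \<open>H\<close> diagonalises \<open>A0\<close>, the factor \<open>B\<close> can be absorbed: the
  change of variable \<open>h(z) = \<beta>\<^sup>2 z/(1 - \<gamma>\<beta> z)\<close> followed by the upper triangular gauge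
  \<open>G(z) = ((a, a - 1/a), (0, 1/a))\<close>, \<open>a = sqrt (1 - \<gamma>\<beta> z)\<close>, turns \<open>\<Phi>\<^sub>0\<close> into
  \<open>Q H\<^sup>-\<^sup>1 exp (w A0)\<close>. Applied to \<open>\<xi>\<^sub>t\<close>, the same \<open>h\<close> and \<open>G\<close> keep the residue \<open>A\<^sub>t dz/z\<close> and
  produce a \<open>C\<^sup>2\<close> remainder, which vanishes at \<open>t = 0\<close> because there the gauged potential is
  again exactly \<open>A0 dz/z\<close>.\<close>

section \<open>Calculus of \<open>C2_on\<close>\<close>

lemma C2_onI:
  "(\<forall>x\<in>U. (f has_derivative blinfun_apply (Da x)) (at x)) \<Longrightarrow>
   (\<forall>x\<in>U. (Da has_derivative blinfun_apply (Db x)) (at x)) \<Longrightarrow> continuous_on U Db \<Longrightarrow> C2_on f U"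
  unfolding C2_on_def by blast

lemma C2_on_compose:
  assumes g: "C2_on g U" and f: "C2_on f V" and U: "open U" and V: "open V" and gUV: "g ` U \<subseteq> V"
  shows "C2_on (\<lambda>x. f (g x)) U"
proof -
  from g obtain Dg1 Dg2 where g1: "\<forall>x\<in>U. (g has_derivative blinfun_apply (Dg1 x)) (at x)"
      and g2: "\<forall>x\<in>U. (Dg1 has_derivative blinfun_apply (Dg2 x)) (at x)" and g3: "continuous_on U Dg2"
    unfolding C2_on_def by blast
  from f obtain Df1 Df2 where f1: "\<forall>x\<in>V. (f has_derivative blinfun_apply (Df1 x)) (at x)"
      and f2: "\<forall>x\<in>V. (Df1 has_derivative blinfun_apply (Df2 x)) (at x)" and f3: "continuous_on V Df2"
    unfolding C2_on_def by blast
  define D1 where "D1 x = Df1 (g x) o\<^sub>L Dg1 x" for x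
  define D2 where "D2 x = (bounded_bilinear.prod_right blinfun_compose (Df1 (g x)) o\<^sub>L Dg2 x)
      + (bounded_bilinear.prod_left blinfun_compose (Dg1 x) o\<^sub>L (Df2 (g x) o\<^sub>L Dg1 x))" for x
  note bb = bounded_bilinear_blinfun_compose
  have gx: "g x \<in> V" if "x \<in> U" for x using gUV that by blast
  have d1: "((\<lambda>x. f (g x)) has_derivative blinfun_apply (D1 x)) (at x)" if x: "x \<in> U" for x
    using has_derivative_compose[OF g1[rule_format, OF x] f1[rule_format, OF gx[OF x]]]
    by (simp add: D1_def blinfun_compose.rep_eq comp_def)
  have dfg: "((\<lambda>x. Df1 (g x)) has_derivative (\<lambda>v. Df2 (g x) (Dg1 x v))) (at x)" if x: "x \<in> U" for x
    using has_derivative_compose[OF g1[rule_format, OF x] f2[rule_format, OF gx[OF x]]] by simp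
  have d2: "(D1 has_derivative blinfun_apply (D2 x)) (at x)" if x: "x \<in> U" for x
  proof -
    have "((\<lambda>x. Df1 (g x) o\<^sub>L Dg1 x) has_derivative
        (\<lambda>h. (Df1 (g x) o\<^sub>L Dg2 x h) + (Df2 (g x) (Dg1 x h) o\<^sub>L Dg1 x))) (at x)"
      using bounded_bilinear.FDERIV[OF bb dfg[OF x] g2[rule_format, OF x]] .
    moreover have "blinfun_apply (D2 x) = (\<lambda>h. (Df1 (g x) o\<^sub>L Dg2 x h) + (Df2 (g x) (Dg1 x h) o\<^sub>L Dg1 x))"
      by (simp add: D2_def bounded_bilinear.prod_right.rep_eq[OF bb] bounded_bilinear.prod_left.rep_eq[OF bb]
          plus_blinfun.rep_eq fun_eq_iff)
    ultimately show ?thesis unfolding D1_def[abs_def] by simp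
  qed
  have cDg1: "continuous_on U Dg1"
    using g2 by (meson continuous_at_imp_continuous_on has_derivative_continuous)
  have cDf1: "continuous_on V Df1"
    using f2 by (meson continuous_at_imp_continuous_on has_derivative_continuous)
  have cg: "continuous_on U g"
    using g1 by (meson continuous_at_imp_continuous_on has_derivative_continuous)
  have c3: "continuous_on U D2"
    unfolding D2_def
    by (intro continuous_on_add bounded_bilinear.continuous_on[OF bb]
        bounded_linear.continuous_on[OF bounded_bilinear.bounded_linear_prod_right[OF bb]]
        bounded_linear.continuous_on[OF bounded_bilinear.bounded_linear_prod_left[OF bb]]
        continuous_on_compose2[OF cDf1 cg gUV] continuous_on_compose2[OF f3 cg gUV] cDg1 g3)
  show ?thesis using C2_onI d1 d2 c3 by blast
qed

lemma C2_on_linear: "bounded_linear L \<Longrightarrow> C2_on L U"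
  by (rule C2_onI[where Da="\<lambda>_. Blinfun L" and Db="\<lambda>_. 0"])
    (auto simp: bounded_linear_Blinfun_apply bounded_linear_imp_has_derivative
      zero_blinfun.rep_eq intro!: continuous_on_const has_derivative_const)

lemma C2_on_const: "C2_on (\<lambda>x. c) U"
  by (rule C2_onI[where Da="\<lambda>_. 0" and Db="\<lambda>_. 0"])
    (auto simp: zero_blinfun.rep_eq intro!: continuous_on_const has_derivative_const)

lemma C2_on_add: assumes "C2_on f U" "C2_on g U" shows "C2_on (\<lambda>x. f x + g x) U"
proof -
  from assms(1) obtain F1 F2 where f: "\<forall>x\<in>U. (f has_derivative blinfun_apply (F1 x)) (at x)"
      "\<forall>x\<in>U. (F1 has_derivative blinfun_apply (F2 x)) (at x)" "continuous_on U F2"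
    unfolding C2_on_def by blast
  from assms(2) obtain G1 G2 where g: "\<forall>x\<in>U. (g has_derivative blinfun_apply (G1 x)) (at x)"
      "\<forall>x\<in>U. (G1 has_derivative blinfun_apply (G2 x)) (at x)" "continuous_on U G2"
    unfolding C2_on_def by blast
  show ?thesis
    by (rule C2_onI[where Da="\<lambda>x. F1 x + G1 x" and Db="\<lambda>x. F2 x + G2 x"])
      (use f g in \<open>auto simp: plus_blinfun.rep_eq intro!: has_derivative_add continuous_on_add\<close>)
qed

lemma C2_on_linear_compose: "bounded_linear L \<Longrightarrow> C2_on f U \<Longrightarrow> open U \<Longrightarrow> C2_on (\<lambda>x. L (f x)) U"
  using C2_on_compose[of f U L UNIV] C2_on_linear by auto

lemma C2_on_Pair: assumes "C2_on f U" "C2_on g U" "open U" shows "C2_on (\<lambda>x. (f x, g x)) U"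
proof -
  have "C2_on (\<lambda>x. (f x, 0)) U"
    by (rule C2_on_linear_compose[OF _ assms(1,3)])
      (intro bounded_linear_Pair bounded_linear_ident bounded_linear_zero)
  moreover have "C2_on (\<lambda>x. (0, g x)) U"
    by (rule C2_on_linear_compose[OF _ assms(2,3)])
      (intro bounded_linear_Pair bounded_linear_ident bounded_linear_zero)
  ultimately show ?thesis using C2_on_add by fastforce
qed

lemma C2_on_bilinear_prod: assumes bb: "bounded_bilinear b" shows "C2_on (\<lambda>p. b (fst p) (snd p)) U"
proof -
  define L where "L p = (bounded_bilinear.prod_left b (snd p) o\<^sub>L fst_blinfun)
     + (bounded_bilinear.prod_right b (fst p) o\<^sub>L snd_blinfun)" for p
  have L: "bounded_linear L"
    unfolding L_def
    by (intro bounded_linear_add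
        bounded_linear_compose[OF bounded_bilinear.bounded_linear_left[OF bounded_bilinear_blinfun_compose]]
        bounded_linear_compose[OF bounded_bilinear.bounded_linear_prod_left[OF bb]]
        bounded_linear_compose[OF bounded_bilinear.bounded_linear_prod_right[OF bb]]
        bounded_linear_fst bounded_linear_snd)
  have d: "((\<lambda>p. b (fst p) (snd p)) has_derivative blinfun_apply (L p)) (at p)" for p
  proof -
    have "((\<lambda>p. b (fst p) (snd p)) has_derivative (\<lambda>q. b (fst p) (snd q) + b (fst q) (snd p))) (at p)"
      by (rule bounded_bilinear.FDERIV[OF bb])
        (auto intro: bounded_linear_imp_has_derivative bounded_linear_fst bounded_linear_snd)
    moreover have "blinfun_apply (L p) = (\<lambda>q. b (fst p) (snd q) + b (fst q) (snd p))"
      by (auto simp: L_def fun_eq_iff plus_blinfun.rep_eq bounded_bilinear.prod_left.rep_eq[OF bb]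
          bounded_bilinear.prod_right.rep_eq[OF bb])
    ultimately show ?thesis by simp
  qed
  show ?thesis
    by (rule C2_onI[where Da=L and Db="\<lambda>_. Blinfun L"])
      (use d L in \<open>auto simp: bounded_linear_Blinfun_apply bounded_linear_imp_has_derivative
         intro!: continuous_on_const\<close>)
qed

lemma C2_on_bilinear:
  "bounded_bilinear b \<Longrightarrow> C2_on f U \<Longrightarrow> C2_on g U \<Longrightarrow> open U \<Longrightarrow> C2_on (\<lambda>x. b (f x) (g x)) U"
  using C2_on_compose[OF C2_on_Pair C2_on_bilinear_prod, of f U g b UNIV] by auto

lemma C2_on_field_deriv:
  fixes f :: "'a::real_normed_field \<Rightarrow> 'a"
  assumes "\<forall>x\<in>S. (f has_field_derivative f' x) (at x)" "\<forall>x\<in>S. (f' has_field_derivative f'' x) (at x)"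
    "continuous_on S f''"
  shows "C2_on f S"
proof (rule C2_onI[where Da="\<lambda>x. blinfun_mult_right (f' x)"
      and Db="\<lambda>x. Blinfun blinfun_mult_right o\<^sub>L blinfun_mult_right (f'' x)"])
  show "\<forall>x\<in>S. (f has_derivative blinfun_apply (blinfun_mult_right (f' x))) (at x)"
    using assms(1) by (simp add: has_field_derivative_def blinfun_mult_right.rep_eq)
  show "\<forall>x\<in>S. ((\<lambda>x. blinfun_mult_right (f' x)) has_derivative
      blinfun_apply (Blinfun blinfun_mult_right o\<^sub>L blinfun_mult_right (f'' x))) (at x)"
  proof
    fix x assume "x \<in> S"
    then have "(f' has_derivative (*) (f'' x)) (at x)" using assms(2) by (simp add: has_field_derivative_def)
    from bounded_linear.has_derivative[OF bounded_linear_blinfun_mult_right this]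
    show "((\<lambda>x. blinfun_mult_right (f' x)) has_derivative
      blinfun_apply (Blinfun blinfun_mult_right o\<^sub>L blinfun_mult_right (f'' x))) (at x)"
      by (simp add: blinfun_compose.rep_eq comp_def
          bounded_linear_Blinfun_apply[OF bounded_linear_blinfun_mult_right])
  qed
  show "continuous_on S (\<lambda>x. Blinfun blinfun_mult_right o\<^sub>L blinfun_mult_right (f'' x))"
    by (intro bounded_bilinear.continuous_on[OF bounded_bilinear_blinfun_compose] continuous_on_const
        bounded_linear.continuous_on[OF bounded_linear_blinfun_mult_right] assms(3))
qed

lemma C2_on_holomorphic:
  fixes f :: "complex \<Rightarrow> complex"
  assumes "f holomorphic_on S" "open S" shows "C2_on f S"
proof (rule C2_on_field_deriv[where f'="deriv f" and f''="deriv (deriv f)"])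
  have h: "deriv f holomorphic_on S" using holomorphic_deriv assms by blast
  show "\<forall>x\<in>S. (f has_field_derivative deriv f x) (at x)" using assms holomorphic_derivI by blast
  show "\<forall>x\<in>S. (deriv f has_field_derivative deriv (deriv f) x) (at x)" using h assms holomorphic_derivI by blast
  show "continuous_on S (deriv (deriv f))"
    using holomorphic_deriv[OF h assms(2)] holomorphic_on_imp_continuous_on by blast
qed

lemma C2_on_minus: "C2_on f U \<Longrightarrow> open U \<Longrightarrow> C2_on (\<lambda>x. - f x) U"
  by (rule C2_on_linear_compose[OF bounded_linear_minus[OF bounded_linear_ident]])

lemma C2_on_diff: "C2_on f U \<Longrightarrow> C2_on g U \<Longrightarrow> open U \<Longrightarrow> C2_on (\<lambda>x. f x - g x) U"
  using C2_on_add[of f U "\<lambda>x. - g x"] C2_on_minus[of g U] by simp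

lemma C2_on_mult:
  fixes f g :: "_ \<Rightarrow> 'a::real_normed_algebra"
  shows "C2_on f U \<Longrightarrow> C2_on g U \<Longrightarrow> open U \<Longrightarrow> C2_on (\<lambda>x. f x * g x) U"
  by (rule C2_on_bilinear[OF bounded_bilinear_mult])

lemma C2_on_power: "C2_on (f :: _ \<Rightarrow> complex) U \<Longrightarrow> open U \<Longrightarrow> C2_on (\<lambda>x. f x ^ n) U"
  by (induction n) (auto intro!: C2_on_const C2_on_mult)

lemma C2_on_inverse:
  assumes "C2_on (g :: _ \<Rightarrow> complex) U" "open U" "\<forall>p\<in>U. g p \<noteq> 0"
  shows "C2_on (\<lambda>p. inverse (g p)) U"
proof -
  have "C2_on inverse (UNIV - {0::complex})"
    by (rule C2_on_holomorphic) (auto intro!: holomorphic_intros)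
  then show ?thesis
    using C2_on_compose[OF assms(1) _ assms(2)] assms(3) by (auto simp: image_subset_iff)
qed

lemma mk2_nth [simp]:
  "mk2 a b c d $ 1 $ 1 = a" "mk2 a b c d $ 1 $ 2 = b" "mk2 a b c d $ 2 $ 1 = c" "mk2 a b c d $ 2 $ 2 = d"
  by (simp_all add: mk2_def)

lemma msc_nth [simp]: "msc k A $ i $ j = k * A $ i $ j"
  by (simp add: msc_def)

lemma cmat_eqI:
  "(A::cmat) $ 1 $ 1 = B $ 1 $ 1 \<Longrightarrow> A $ 1 $ 2 = B $ 1 $ 2 \<Longrightarrow>
   A $ 2 $ 1 = B $ 2 $ 1 \<Longrightarrow> A $ 2 $ 2 = B $ 2 $ 2 \<Longrightarrow> A = B"
  by (simp add: vec_eq_iff forall_2)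

lemma cmat_eq_mk2: "(A::cmat) = mk2 (A$1$1) (A$1$2) (A$2$1) (A$2$2)"
  by (rule cmat_eqI) simp_all

lemma mk2_eq_iff: "mk2 a b c d = mk2 a' b' c' d' \<longleftrightarrow> a = a' \<and> b = b' \<and> c = c' \<and> d = d'"
  by (metis mk2_nth)

lemma mk2_mult: "mk2 a b c d ** mk2 e f g h = mk2 (a*e+b*g) (a*f+b*h) (c*e+d*g) (c*f+d*h)"
  by (rule cmat_eqI) (simp_all add: matrix_matrix_mult_def sum_2)

lemma mk2_add: "mk2 a b c d + mk2 e f g h = mk2 (a+e) (b+f) (c+g) (d+h)"
  by (rule cmat_eqI) simp_all

lemma msc_mk2: "msc k (mk2 a b c d) = mk2 (k*a) (k*b) (k*c) (k*d)"
  by (rule cmat_eqI) simp_all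

lemma det_mk2: "det (mk2 a b c d) = a*d - b*c"
  by (simp add: det_2)

lemma mat1_eq_mk2: "mat 1 = mk2 1 0 0 1"
  by (rule cmat_eqI) (simp_all add: mat_def)

lemma zero_eq_mk2: "0 = mk2 0 0 0 0"
  by (rule cmat_eqI) simp_all

lemma conj_transpose_mk2: "conj_transpose (mk2 a b c d) = mk2 (cnj a) (cnj c) (cnj b) (cnj d)"
  by (rule cmat_eqI) (simp_all add: conj_transpose_def)

lemma msc_add_right: "msc k (A + B) = msc k A + msc k B"
  by (rule cmat_eqI) (simp_all add: algebra_simps)

lemma msc_msc: "msc a (msc b A) = msc (a*b) A"
  by (rule cmat_eqI) simp_all

lemma msc_zero_right: "msc k 0 = 0"
  by (rule cmat_eqI) simp_all

lemma matrix_inv_unique: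
  fixes A B :: "'a::comm_ring_1^'n^'n"
  assumes "A ** B = mat 1" "B ** A = mat 1"
  shows "matrix_inv A = B"
proof -
  have "A ** matrix_inv A = mat 1 \<and> matrix_inv A ** A = mat 1"
    unfolding matrix_inv_def by (rule someI_ex) (use assms in blast)
  then have "matrix_inv A = matrix_inv A ** (A ** B)" and "matrix_inv A ** A = mat 1"
    using assms by simp_all
  then show ?thesis by (simp add: matrix_mul_assoc)
qed

lemma matrix_inv_mk2: "a*d - b*c = 1 \<Longrightarrow> matrix_inv (mk2 a b c d) = mk2 d (-b) (-c) a"
  by (rule matrix_inv_unique) (simp_all add: mk2_mult mat1_eq_mk2 algebra_simps)

lemma bounded_bilinear_msc: "bounded_bilinear msc"
proof (rule bounded_bilinear.intro)
  show "msc (a + a') b = msc a b + msc a' b" "msc a (b + b') = msc a b + msc a b'"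
    "msc (r *\<^sub>R a) b = r *\<^sub>R msc a b" "msc a (r *\<^sub>R b) = r *\<^sub>R msc a b" for a a' b b' r
    by (simp_all add: msc_def vec_eq_iff algebra_simps)
  show "\<exists>K. \<forall>a b. norm (msc a b) \<le> norm a * norm b * K"
  proof (intro exI allI)
    fix a b
    have row: "norm (v::'b::real_normed_vector^2) \<le> (\<Sum>i\<in>UNIV. norm (v $ i))" for v
      unfolding norm_vec_def by (rule L2_set_le_sum) simp
    have "norm (msc a b) \<le> (\<Sum>i\<in>UNIV. \<Sum>j\<in>UNIV. norm (msc a b $ i $ j))"
      by (rule order_trans[OF row sum_mono[OF row]])
    also have "\<dots> \<le> (\<Sum>i\<in>(UNIV::2 set). \<Sum>j\<in>(UNIV::2 set). norm a * norm b)"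
    proof (intro sum_mono)
      fix i j
      have "norm (b $ i $ j) \<le> norm b"
        using order_trans[OF Finite_Cartesian_Product.norm_nth_le Finite_Cartesian_Product.norm_nth_le] .
      then show "norm (msc a b $ i $ j) \<le> norm a * norm b"
        by (simp add: norm_mult mult_left_mono)
    qed
    also have "\<dots> = norm a * norm b * 4" by (simp add: sum_2)
    finally show "norm (msc a b) \<le> norm a * norm b * 4" .
  qed
qed

lemma C2_on_msc: "C2_on f U \<Longrightarrow> C2_on g U \<Longrightarrow> open U \<Longrightarrow> C2_on (\<lambda>x. msc (f x) (g x)) U"
  by (rule C2_on_bilinear[OF bounded_bilinear_msc])

lemma C2_on_entry: "C2_on (f :: _ \<Rightarrow> cmat) U \<Longrightarrow> open U \<Longrightarrow> C2_on (\<lambda>x. f x $ i $ j) U"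
  by (rule C2_on_linear_compose[OF bounded_linear_compose[OF bounded_linear_vec_nth bounded_linear_vec_nth]])

lemma C2_on_mk2:
  assumes "C2_on a U" "C2_on b U" "C2_on c U" "C2_on d U" "open U"
  shows "C2_on (\<lambda>x. mk2 (a x) (b x) (c x) (d x)) U"
proof -
  have "(\<lambda>x. mk2 (a x) (b x) (c x) (d x)) = (\<lambda>x. msc (a x) (mk2 1 0 0 0) + msc (b x) (mk2 0 1 0 0)
     + msc (c x) (mk2 0 0 1 0) + msc (d x) (mk2 0 0 0 1))"
    by (simp add: fun_eq_iff msc_mk2 mk2_add)
  then show ?thesis by (simp only:) (intro C2_on_add C2_on_msc C2_on_const assms)
qed

lemma mholo_mk2:
  "a holomorphic_on S \<Longrightarrow> b holomorphic_on S \<Longrightarrow> c holomorphic_on S \<Longrightarrow> d holomorphic_on S \<Longrightarrow>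
   mholo (\<lambda>z. mk2 (a z) (b z) (c z) (d z)) S"
  unfolding mholo_def by (simp add: forall_2)

lemma mholo_entry: "mholo f S \<Longrightarrow> (\<lambda>z. f z $ i $ j) holomorphic_on S"
  by (simp add: mholo_def)

lemma mholo_cong: "mholo f S \<Longrightarrow> (\<And>z. z \<in> S \<Longrightarrow> f z = g z) \<Longrightarrow> mholo g S"
  unfolding mholo_def by (metis (mono_tags, lifting) holomorphic_transform)

lemma mholo_add: "mholo f S \<Longrightarrow> mholo g S \<Longrightarrow> mholo (\<lambda>x. f x + g x) S"
  unfolding mholo_def by (auto intro!: holomorphic_intros)

lemma mholo_msc: "k holomorphic_on S \<Longrightarrow> mholo f S \<Longrightarrow> mholo (\<lambda>x. msc (k x) (f x)) S"
  unfolding mholo_def by (auto intro!: holomorphic_intros)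

lemma mholo_const: "mholo (\<lambda>x. K) S"
  unfolding mholo_def by (auto intro!: holomorphic_intros)

lemma mholo_compose:
  assumes "mholo f T" "g holomorphic_on S" "g ` S \<subseteq> T"
  shows "mholo (\<lambda>z. f (g z)) S"
  unfolding mholo_def
proof (intro allI)
  fix i j
  have "(\<lambda>z. f z $ i $ j) holomorphic_on T" using assms(1) by (simp add: mholo_def)
  then show "(\<lambda>z. f (g z) $ i $ j) holomorphic_on S"
    using holomorphic_on_compose_gen[OF assms(2) _ assms(3)] by (simp add: o_def)
qed

section \<open>The triangular gauge and the change of variable\<close>

definition mobius_cv :: "complex \<Rightarrow> complex \<Rightarrow> complex \<Rightarrow> complex" where
  "mobius_cv c x z = c * z / (1 + x * z)"

definition tri_gauge :: "complex \<Rightarrow> complex \<Rightarrow> cmat" where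
  "tri_gauge x z = mk2 (csqrt (1 + x*z)) (csqrt (1 + x*z) - 1 / csqrt (1 + x*z)) 0 (1 / csqrt (1 + x*z))"

text \<open>\<open>tri_conj s M\<close> is \<open>G\<^sup>-\<^sup>1 M G\<close> for \<open>G = mk2 a (a - 1/a) 0 (1/a)\<close> with \<open>a\<^sup>2 = 1 + s\<close>;
  it only depends on \<open>a\<^sup>2\<close>, so no branch of the square root is needed.\<close>
definition tri_conj :: "complex \<Rightarrow> cmat \<Rightarrow> cmat" where
  "tri_conj s M = mk2 (M$1$1 - s*M$2$1) ((s*M$1$1 + M$1$2 - s^2*M$2$1 - s*M$2$2)/(1+s))
     ((1+s)*M$2$1) (s*M$2$1 + M$2$2)"

definition tri_gauge_log_deriv :: "complex \<Rightarrow> complex \<Rightarrow> cmat" where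
  "tri_gauge_log_deriv x z = mk2 (x/(2*(1+x*z))) (x/(1+x*z)) 0 (-x/(2*(1+x*z)))"

definition residue_correction :: "complex \<Rightarrow> complex \<Rightarrow> complex \<Rightarrow> complex \<Rightarrow> cmat" where
  "residue_correction x z p q = mk2 (-x*q) ((-2*x*p - x^2*z*(p+q))/(1+x*z)) 0 (x*q)"

lemma one_plus_nonzero: "cmod (x*z) < 1 \<Longrightarrow> 1 + x*z \<noteq> 0"
  by (metis add.commute add_eq_0_iff norm_minus_cancel norm_one order_less_irrefl)

lemma one_plus_notin_nonpos_Reals:
  assumes "cmod (x*z) < 1" shows "1 + x*z \<notin> \<real>\<^sub>\<le>\<^sub>0"
proof -
  have "- Re (x*z) \<le> cmod (x*z)" using abs_Re_le_cmod[of "x*z"] by linarith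
  then show ?thesis using assms by (auto simp: complex_nonpos_Reals_iff)
qed

lemma tri_conj_eq:
  assumes "a \<noteq> 0" "a^2 = 1 + s"
  shows "mk2 (1/a) (-(a-1/a)) 0 a ** M ** mk2 a (a-1/a) 0 (1/a) = tri_conj s M"
proof -
  have "s = a^2 - 1" using assms(2) by simp
  then show ?thesis
    by (subst cmat_eq_mk2[of M], simp add: mk2_mult tri_conj_def mk2_eq_iff)
      (use assms(1) in \<open>auto simp: field_simps power2_eq_square\<close>)
qed

lemma tri_gauge_log_deriv_eq:
  assumes "a \<noteq> 0" "a^2 = 1 + x*z" "a' = x/(2*a)"
  shows "mk2 (1/a) (-(a-1/a)) 0 a ** mk2 a' (a' + a'/a^2) 0 (-a'/a^2) = tri_gauge_log_deriv x z"
  by (simp add: mk2_mult tri_gauge_log_deriv_def mk2_eq_iff assms(3) flip: assms(2))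
    (use assms(1) in \<open>auto simp: field_simps power2_eq_square\<close>)

lemma tri_gauge_entry_derivs:
  assumes "cmod (x*z) < 1"
  defines "a \<equiv> csqrt (1 + x*z)"
  shows "(\<chi> i j. deriv (\<lambda>y. tri_gauge x y $ i $ j) z) = mk2 (x/(2*a)) (x/(2*a) + x/(2*a)/a^2) 0 (-(x/(2*a))/a^2)"
proof -
  have a0: "a \<noteq> 0" using one_plus_nonzero[OF assms(1)] by (simp add: a_def)
  have da: "((\<lambda>y. csqrt (1 + x*y)) has_field_derivative x/(2*a)) (at z)"
    using one_plus_notin_nonpos_Reals[OF assms(1)] by (auto intro!: derivative_eq_intros simp: a_def)
  have dinv: "((\<lambda>y. 1 / csqrt (1 + x*y)) has_field_derivative -(x/(2*a))/a^2) (at z)"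
    using DERIV_inverse_fun[OF da] a0
    by (simp add: a_def inverse_eq_divide power2_eq_square)
  show ?thesis
    by (rule cmat_eqI) (simp_all add: tri_gauge_def DERIV_imp_deriv[OF da] DERIV_imp_deriv[OF dinv]
        DERIV_imp_deriv[OF DERIV_diff[OF da dinv]])
qed

lemma deriv_mobius_cv: "1 + x*z \<noteq> 0 \<Longrightarrow> deriv (mobius_cv c x) z = c/(1+x*z)^2"
  unfolding mobius_cv_def
  by (rule DERIV_imp_deriv) (auto intro!: derivative_eq_intros simp: field_simps power2_eq_square)

lemma gauge_act_tri_gauge:
  assumes "cmod (x*z) < 1"
  shows "gauge_act (pullback (mobius_cv c x) \<xi>) (\<lambda>z l. tri_gauge x z) z l
     = tri_conj (x*z) (msc (c/(1+x*z)^2) (\<xi> (mobius_cv c x z) l)) + tri_gauge_log_deriv x z"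
proof -
  define a where "a = csqrt (1 + x*z)"
  have a0: "a \<noteq> 0" and a2: "a^2 = 1 + x*z"
    using one_plus_nonzero[OF assms] by (simp_all add: a_def)
  have G: "tri_gauge x z = mk2 a (a - 1/a) 0 (1/a)" by (simp add: tri_gauge_def a_def)
  have Gi: "matrix_inv (tri_gauge x z) = mk2 (1/a) (-(a-1/a)) 0 a"
    unfolding G using matrix_inv_mk2[of a "1/a" "a - 1/a" 0] a0 by simp
  show ?thesis
    unfolding gauge_act_def pullback_def Gi deriv_mobius_cv[OF one_plus_nonzero[OF assms]]
      tri_gauge_entry_derivs[OF assms] a_def[symmetric]
    by (subst G, subst tri_conj_eq[OF a0 a2], subst tri_gauge_log_deriv_eq[OF a0 a2 refl]) (rule refl)
qed

lemma tri_conj_add: "tri_conj s (A + B) = tri_conj s A + tri_conj s B"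
  by (simp add: tri_conj_def mk2_add add_divide_distrib[symmetric] algebra_simps)

lemma tri_conj_msc: "tri_conj s (msc k A) = msc k (tri_conj s A)"
  by (simp add: tri_conj_def msc_mk2 algebra_simps add_divide_distrib diff_divide_distrib)

lemma tri_conj_zero: "tri_conj s 0 = 0"
  by (simp add: tri_conj_def zero_eq_mk2[symmetric])

lemma tri_conj_trace: "tri_conj s M $ 1 $ 1 + tri_conj s M $ 2 $ 2 = M $ 1 $ 1 + M $ 2 $ 2"
  by (simp add: tri_conj_def algebra_simps)

lemma tri_conj_upper_nilpotent:
  "M $ 1 $ 1 = 0 \<Longrightarrow> M $ 2 $ 1 = 0 \<Longrightarrow> M $ 2 $ 2 = 0 \<Longrightarrow>
   tri_conj s M $ 1 $ 1 = 0 \<and> tri_conj s M $ 2 $ 1 = 0 \<and> tri_conj s M $ 2 $ 2 = 0"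
  by (simp add: tri_conj_def)

lemma mholo_tri_conj:
  assumes "mholo f S" "s holomorphic_on S" "\<forall>z\<in>S. 1 + s z \<noteq> 0"
  shows "mholo (\<lambda>z. tri_conj (s z) (f z)) S"
  unfolding tri_conj_def
  by (intro mholo_mk2 holomorphic_intros mholo_entry[OF assms(1)] assms(2)) (use assms(3) in auto)

lemma mholo_tri_gauge_log_deriv: "\<forall>z\<in>S. 1 + x*z \<noteq> 0 \<Longrightarrow> mholo (tri_gauge_log_deriv x) S"
  unfolding tri_gauge_log_deriv_def
  by (intro mholo_mk2 holomorphic_intros) (auto simp del: distrib_left_numeral)

lemma mobius_cv_holomorphic: "mobius_cv c x holomorphic_on {z. cmod (x*z) < 1}"
  unfolding mobius_cv_def by (auto intro!: holomorphic_intros dest: one_plus_nonzero)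

lemma tri_conj_residue_term:
  assumes "z \<noteq> 0" "1 + x*z \<noteq> 0" "c \<noteq> 0"
  shows "tri_conj (x*z) (msc (c/(1+x*z)^2) (msc (1 / mobius_cv c x z) (mk2 0 p q 0)))
     = msc (1/z) (mk2 0 p q 0) + msc (1/(1+x*z)) (residue_correction x z p q)"
proof -
  define e where "e = 1 + x*z"
  have "e \<noteq> 0" "x = (e - 1)/z" using assms by (simp_all add: e_def field_simps)
  then show ?thesis
    unfolding tri_conj_def residue_correction_def mobius_cv_def e_def[symmetric]
    by (simp add: msc_mk2 mk2_add mk2_eq_iff) (use assms in \<open>auto simp: field_simps power2_eq_square\<close>)
qed

text \<open>For the vacuum residue \<open>A0\<close> the correction is cancelled by \<open>G\<^sup>-\<^sup>1 dG\<close>: this is what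
  determines the triangular gauge.\<close>
lemma residue_correction_vacuum:
  assumes "1 + x*z \<noteq> 0"
  shows "msc (1/(1+x*z)) (residue_correction x z (1/2) (1/2)) + tri_gauge_log_deriv x z = 0"
    (is "?lhs = 0")
proof -
  have n: "-2*x*(1/2) - x^2*z*(1/2+1/2) = -x*(1+x*z)" by (simp add: algebra_simps power2_eq_square)
  show ?thesis
  proof (rule cmat_eqI)
    show "?lhs $ 1 $ 2 = 0 $ 1 $ 2"
      unfolding residue_correction_def tri_gauge_log_deriv_def by (simp only: n mk2_nth msc_nth mk2_add) (simp add: assms)
  qed (use assms in \<open>simp_all add: residue_correction_def tri_gauge_log_deriv_def field_simps\<close>)
qed

lemma C2_on_rD: "C2_on rD {..<1/16}"
proof (rule C2_on_field_deriv[where f'="\<lambda>t. 2 / sqrt (1 - 16*t)" and f''="\<lambda>t. 16 / ((1 - 16*t) * sqrt (1 - 16*t))"])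
  show "\<forall>t\<in>{..<1/16}. (rD has_field_derivative 2 / sqrt (1 - 16 * t)) (at t)"
  proof
    fix t :: real assume "t \<in> {..<1/16}"
    then have "0 < 1 - 16*t" by simp
    then have "((\<lambda>t. (1 - sqrt (1 - 16*t)) / 4) has_field_derivative
           (- (inverse (sqrt (1 - 16*t)) / 2 * (- 16))) / 4) (at t)"
      by (auto intro!: derivative_eq_intros)
    then show "(rD has_field_derivative 2 / sqrt (1 - 16 * t)) (at t)"
      by (simp add: rD_def[abs_def] field_simps)
  qed
  show "\<forall>t\<in>{..<1/16}. ((\<lambda>t. 2 / sqrt (1 - 16 * t)) has_field_derivative
          16 / ((1 - 16 * t) * sqrt (1 - 16 * t))) (at t)"
  proof
    fix t :: real assume "t \<in> {..<1/16}"
    then have p: "0 < 1 - 16*t" by simp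
    then have "((\<lambda>t. 2 / sqrt (1 - 16 * t)) has_field_derivative
       (- (2 * (inverse (sqrt (1 - 16*t)) / 2 * (- 16))) / (sqrt (1 - 16*t))\<^sup>2)) (at t)"
      by (auto intro!: derivative_eq_intros)
    moreover have "(- (2 * (inverse (sqrt (1 - 16*t)) / 2 * (- 16))) / (sqrt (1 - 16*t))\<^sup>2)
        = 16 / ((1 - 16 * t) * sqrt (1 - 16 * t))"
      using p by (simp add: field_simps)
    ultimately show "((\<lambda>t. 2 / sqrt (1 - 16 * t)) has_field_derivative
          16 / ((1 - 16 * t) * sqrt (1 - 16 * t))) (at t)" by simp
  qed
  show "continuous_on {..<1/16} (\<lambda>t. 16 / ((1 - 16 * t) * sqrt (1 - 16 * t)))"
    by (intro continuous_intros) auto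
qed

lemma C2_on_of_real_rD:
  assumes "open U" "\<forall>p\<in>U. fst p < 1/16"
  shows "C2_on (\<lambda>p::real\<times>'a::real_normed_vector. complex_of_real (rD (fst p))) U"
proof -
  have "C2_on (\<lambda>p::real\<times>'a. rD (fst p)) U"
    using C2_on_compose[OF C2_on_linear[OF bounded_linear_fst] C2_on_rD assms(1)] assms(2)
    by (auto simp: image_subset_iff)
  then show ?thesis by (rule C2_on_linear_compose[OF bounded_linear_of_real _ assms(1)])
qed

lemma C2_on_of_real_sD:
  assumes "open U" "\<forall>p\<in>U. fst p < 1/16"
  shows "C2_on (\<lambda>p::real\<times>'a::real_normed_vector. complex_of_real (sD (fst p))) U"
proof -
  have "sD t = 1/2 - rD t" for t by (simp add: sD_def rD_def field_simps)
  then show ?thesis by (simp only: of_real_diff) (intro C2_on_diff C2_on_const C2_on_of_real_rD assms)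
qed

lemma C2_on_fst_snd: "C2_on (\<lambda>p::'a::real_normed_vector\<times>'b::real_normed_vector\<times>'c::real_normed_vector. fst (snd p)) U"
  by (rule C2_on_linear) (intro bounded_linear_compose[OF bounded_linear_fst bounded_linear_snd])

lemma C2_on_snd_snd: "C2_on (\<lambda>p::'a::real_normed_vector\<times>'b::real_normed_vector\<times>'c::real_normed_vector. snd (snd p)) U"
  by (rule C2_on_linear) (intro bounded_linear_compose[OF bounded_linear_snd bounded_linear_snd])

definition gauged_remainder ::
  "(real \<Rightarrow> complex \<Rightarrow> complex \<Rightarrow> cmat) \<Rightarrow> complex \<Rightarrow> complex \<Rightarrow> real \<Rightarrow> complex \<Rightarrow> complex \<Rightarrow> cmat" where
  "gauged_remainder R c x t z l = tri_conj (x*z) (msc (c/(1+x*z)^2) (R t (mobius_cv c x z) l))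
      + msc (1/(1+x*z)) (residue_correction x z (DelA t l $ 1 $ 2) (DelA t l $ 2 $ 1))
      + tri_gauge_log_deriv x z"

lemma C2_on_remainder_compose:
  fixes R :: "real \<Rightarrow> complex \<Rightarrow> complex \<Rightarrow> cmat"
  assumes R: "C2_on (\<lambda>(t,z,l). R t z l) V" and V: "open V" and U: "open U"
    and small: "\<forall>p\<in>U. cmod (x * fst (snd p)) < 1"
    and UV: "\<forall>p\<in>U. (fst p, mobius_cv c x (fst (snd p)), snd (snd p)) \<in> V"
  shows "C2_on (\<lambda>p. R (fst p) (mobius_cv c x (fst (snd p))) (snd (snd p))) U"
proof -
  have "open {z. cmod (x*z) < 1}" by (intro open_Collect_less continuous_intros)
  then have "C2_on (\<lambda>p::real\<times>complex\<times>complex. mobius_cv c x (fst (snd p))) U"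
    using C2_on_compose[OF C2_on_fst_snd C2_on_holomorphic[OF mobius_cv_holomorphic] U] small
    by auto
  then have g: "C2_on (\<lambda>p::real\<times>complex\<times>complex. (fst p, mobius_cv c x (fst (snd p)), snd (snd p))) U"
    by (intro C2_on_Pair C2_on_linear[OF bounded_linear_fst] C2_on_snd_snd U)
  show ?thesis
    using C2_on_compose[OF g R U V] UV by (auto simp: image_subset_iff)
qed

lemma C2_on_gauged_remainder:
  fixes R :: "real \<Rightarrow> complex \<Rightarrow> complex \<Rightarrow> cmat"
  assumes R: "C2_on (\<lambda>(t,z,l). R t z l) V" and V: "open V" and U: "open U"
    and small: "\<forall>p\<in>U. cmod (x * fst (snd p)) < 1"
    and UV: "\<forall>p\<in>U. (fst p, mobius_cv c x (fst (snd p)), snd (snd p)) \<in> V"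
    and t: "\<forall>p\<in>U. fst p < 1/16" and l: "\<forall>p\<in>U. snd (snd p) \<noteq> 0"
  shows "C2_on (\<lambda>(t,z,l). gauged_remainder R c x t z l) U"
proof -
  note Rc = C2_on_remainder_compose[OF R V U small UV]
  have nz: "\<forall>p\<in>U. 1 + x * fst (snd p) \<noteq> 0" using small one_plus_nonzero by blast
  then have nz2: "\<forall>p\<in>U. 2 + 2 * (x * fst (snd p)) \<noteq> 0"
    by (metis distrib_left_numeral mult_eq_0_iff mult.right_neutral zero_neq_numeral)
  have "(\<lambda>(t,z,l). gauged_remainder R c x t z l) = (\<lambda>p. gauged_remainder R c x (fst p) (fst (snd p)) (snd (snd p)))"
    by (simp add: fun_eq_iff)
  then show ?thesis
    unfolding gauged_remainder_def tri_conj_def residue_correction_def tri_gauge_log_deriv_def DelA_def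
      mk2_nth msc_mk2 mk2_add msc_nth divide_inverse
    by (simp only:) (intro C2_on_mk2 C2_on_add C2_on_diff C2_on_mult C2_on_minus C2_on_power C2_on_const
        C2_on_fst_snd C2_on_snd_snd C2_on_of_real_rD C2_on_of_real_sD C2_on_entry[OF Rc] C2_on_inverse U t;
        use nz nz2 l in auto)
qed

lemma DPW_pot_cong:
  assumes "DPW_pot \<xi> \<Omega> \<rho>" and eq: "\<And>z l. z \<in> \<Omega> \<Longrightarrow> l \<in> annulus \<rho> \<Longrightarrow> \<xi> z l = \<xi>' z l"
  shows "DPW_pot \<xi>' \<Omega> \<rho>"
  unfolding DPW_pot_def
proof (intro conjI ballI)
  fix l assume l: "l \<in> annulus \<rho>"
  show "mholo (\<lambda>z. \<xi>' z l) \<Omega>"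
    using assms(1) l eq unfolding DPW_pot_def by (metis mholo_cong)
next
  fix z assume z: "z \<in> \<Omega>"
  show "mholo (\<xi>' z) (annulus \<rho>)"
    using assms(1) z eq unfolding DPW_pot_def by (metis mholo_cong)
  show "\<exists>F. mholo F (ball 0 \<rho>) \<and> (\<forall>l\<in>annulus \<rho>. F l = msc l (\<xi>' z l)) \<and>
      F 0 $ 1 $ 1 = 0 \<and> F 0 $ 2 $ 1 = 0 \<and> F 0 $ 2 $ 2 = 0"
    using assms(1) z eq unfolding DPW_pot_def by metis
next
  fix z l assume "z \<in> \<Omega>" "l \<in> annulus \<rho>"
  then show "\<xi>' z l $ 1 $ 1 + \<xi>' z l $ 2 $ 2 = 0"
    using assms(1) eq unfolding DPW_pot_def by metis
qed

lemma DPW_pot_compose: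
  assumes "DPW_pot \<xi> \<Omega> \<rho>" "h holomorphic_on \<Omega>'" "h ` \<Omega>' \<subseteq> \<Omega>" "k holomorphic_on \<Omega>'"
  shows "DPW_pot (\<lambda>z l. msc (k z) (\<xi> (h z) l)) \<Omega>' \<rho>"
  unfolding DPW_pot_def
proof (intro conjI ballI)
  have hz: "h z \<in> \<Omega>" if "z \<in> \<Omega>'" for z using assms(3) that by blast
  fix l assume l: "l \<in> annulus \<rho>"
  show "mholo (\<lambda>z. msc (k z) (\<xi> (h z) l)) \<Omega>'"
    using assms(1) l unfolding DPW_pot_def by (intro mholo_msc mholo_compose[OF _ assms(2,3)] assms(4)) blast
next
  fix z assume z: "z \<in> \<Omega>'"
  then have hz: "h z \<in> \<Omega>" using assms(3) by blast
  show "mholo (\<lambda>l. msc (k z) (\<xi> (h z) l)) (annulus \<rho>)"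
    using assms(1) hz unfolding DPW_pot_def by (intro mholo_msc holomorphic_intros) blast
  obtain F where F: "mholo F (ball 0 \<rho>)" "\<forall>l\<in>annulus \<rho>. F l = msc l (\<xi> (h z) l)"
    "F 0 $ 1 $ 1 = 0" "F 0 $ 2 $ 1 = 0" "F 0 $ 2 $ 2 = 0"
    using assms(1) hz unfolding DPW_pot_def by blast
  show "\<exists>F. mholo F (ball 0 \<rho>) \<and> (\<forall>l\<in>annulus \<rho>. F l = msc l (msc (k z) (\<xi> (h z) l))) \<and>
      F 0 $ 1 $ 1 = 0 \<and> F 0 $ 2 $ 1 = 0 \<and> F 0 $ 2 $ 2 = 0"
    by (rule exI[of _ "\<lambda>l. msc (k z) (F l)"])
      (use F in \<open>auto intro!: mholo_msc holomorphic_intros simp: msc_msc mult.commute\<close>)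
next
  fix z l assume "z \<in> \<Omega>'" "l \<in> annulus \<rho>"
  then have "\<xi> (h z) l $ 1 $ 1 + \<xi> (h z) l $ 2 $ 2 = 0"
    using assms(1,3) unfolding DPW_pot_def by blast
  then show "msc (k z) (\<xi> (h z) l) $ 1 $ 1 + msc (k z) (\<xi> (h z) l) $ 2 $ 2 = 0"
    by (simp flip: distrib_left)
qed

lemma DPW_pot_tri_conj:
  assumes "DPW_pot \<xi> \<Omega> \<rho>" "s holomorphic_on \<Omega>" "\<forall>z\<in>\<Omega>. 1 + s z \<noteq> 0"
  shows "DPW_pot (\<lambda>z l. tri_conj (s z) (\<xi> z l)) \<Omega> \<rho>"
  unfolding DPW_pot_def
proof (intro conjI ballI)
  fix l assume "l \<in> annulus \<rho>"
  then show "mholo (\<lambda>z. tri_conj (s z) (\<xi> z l)) \<Omega>"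
    using assms unfolding DPW_pot_def by (intro mholo_tri_conj) blast+
next
  fix z assume z: "z \<in> \<Omega>"
  then show "mholo (\<lambda>l. tri_conj (s z) (\<xi> z l)) (annulus \<rho>)"
    using assms unfolding DPW_pot_def by (intro mholo_tri_conj holomorphic_intros) auto
  obtain F where F: "mholo F (ball 0 \<rho>)" "\<forall>l\<in>annulus \<rho>. F l = msc l (\<xi> z l)"
    "F 0 $ 1 $ 1 = 0" "F 0 $ 2 $ 1 = 0" "F 0 $ 2 $ 2 = 0"
    using assms(1) z unfolding DPW_pot_def by blast
  show "\<exists>F. mholo F (ball 0 \<rho>) \<and> (\<forall>l\<in>annulus \<rho>. F l = msc l (tri_conj (s z) (\<xi> z l))) \<and>
      F 0 $ 1 $ 1 = 0 \<and> F 0 $ 2 $ 1 = 0 \<and> F 0 $ 2 $ 2 = 0"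
    by (rule exI[of _ "\<lambda>l. tri_conj (s z) (F l)"])
      (use F z assms(3) tri_conj_upper_nilpotent[OF F(3-5)] in
        \<open>auto intro!: mholo_tri_conj holomorphic_intros simp: tri_conj_msc\<close>)
next
  fix z l assume "z \<in> \<Omega>" "l \<in> annulus \<rho>"
  then show "tri_conj (s z) (\<xi> z l) $ 1 $ 1 + tri_conj (s z) (\<xi> z l) $ 2 $ 2 = 0"
    using assms(1) unfolding DPW_pot_def tri_conj_trace by blast
qed

lemma DPW_pot_add_regular:
  assumes "DPW_pot \<xi> \<Omega> \<rho>" "mholo N \<Omega>" "\<forall>z\<in>\<Omega>. N z $ 1 $ 1 + N z $ 2 $ 2 = 0"
  shows "DPW_pot (\<lambda>z l. \<xi> z l + N z) \<Omega> \<rho>"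
  unfolding DPW_pot_def
proof (intro conjI ballI)
  fix l assume "l \<in> annulus \<rho>"
  then show "mholo (\<lambda>z. \<xi> z l + N z) \<Omega>"
    using assms unfolding DPW_pot_def by (intro mholo_add) blast+
next
  fix z assume z: "z \<in> \<Omega>"
  then show "mholo (\<lambda>l. \<xi> z l + N z) (annulus \<rho>)"
    using assms unfolding DPW_pot_def by (intro mholo_add mholo_const) blast
  obtain F where F: "mholo F (ball 0 \<rho>)" "\<forall>l\<in>annulus \<rho>. F l = msc l (\<xi> z l)"
    "F 0 $ 1 $ 1 = 0" "F 0 $ 2 $ 1 = 0" "F 0 $ 2 $ 2 = 0"
    using assms(1) z unfolding DPW_pot_def by blast
  show "\<exists>F. mholo F (ball 0 \<rho>) \<and> (\<forall>l\<in>annulus \<rho>. F l = msc l (\<xi> z l + N z)) \<and>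
      F 0 $ 1 $ 1 = 0 \<and> F 0 $ 2 $ 1 = 0 \<and> F 0 $ 2 $ 2 = 0"
    by (rule exI[of _ "\<lambda>l. F l + msc l (N z)"])
      (use F in \<open>auto intro!: mholo_add mholo_msc mholo_const holomorphic_intros simp: msc_add_right\<close>)
next
  fix z l assume "z \<in> \<Omega>" "l \<in> annulus \<rho>"
  then show "(\<xi> z l + N z) $ 1 $ 1 + (\<xi> z l + N z) $ 2 $ 2 = 0"
    using assms(1,3) unfolding DPW_pot_def by (simp add: algebra_simps)
qed

lemma DPW_pot_gauge_transform:
  assumes "DPW_pot \<xi> \<Omega> \<rho>" "\<forall>z\<in>\<Omega>'. cmod (x*z) < 1" "mobius_cv c x ` \<Omega>' \<subseteq> \<Omega>"
  shows "DPW_pot (gauge_act (pullback (mobius_cv c x) \<xi>) (\<lambda>z l. tri_gauge x z)) \<Omega>' \<rho>"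
proof (rule DPW_pot_cong)
  have nz: "\<forall>z\<in>\<Omega>'. 1 + x*z \<noteq> 0" using assms(2) one_plus_nonzero by blast
  have "DPW_pot (\<lambda>z l. msc (c/(1+x*z)^2) (\<xi> (mobius_cv c x z) l)) \<Omega>' \<rho>"
    using assms(2,3) nz
    by (intro DPW_pot_compose[OF assms(1)] holomorphic_on_subset[OF mobius_cv_holomorphic]
        holomorphic_intros) auto
  then show "DPW_pot (\<lambda>z l. tri_conj (x*z) (msc (c/(1+x*z)^2) (\<xi> (mobius_cv c x z) l))
      + tri_gauge_log_deriv x z) \<Omega>' \<rho>"
    using nz by (intro DPW_pot_add_regular DPW_pot_tri_conj mholo_tri_gauge_log_deriv holomorphic_intros)
      (auto simp: tri_gauge_log_deriv_def)
qed (use assms(2) gauge_act_tri_gauge in auto)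

lemma open_annulus: "open (annulus \<rho>)"
  unfolding annulus_def by (intro open_Collect_conj open_Collect_less continuous_intros)

lemma zero_notin_annulus: "l \<in> annulus \<rho> \<Longrightarrow> l \<noteq> 0"
  by (auto simp: annulus_def)

lemma gauged_remainder_vacuum:
  assumes "1 + x*z \<noteq> 0" "R 0 (mobius_cv c x z) l = 0"
  shows "gauged_remainder R c x 0 z l = 0"
proof -
  have entries: "DelA 0 l $ 1 $ 2 = 1/2" "DelA 0 l $ 2 $ 1 = 1/2"
    by (simp_all add: DelA_def rD_def sD_def)
  show ?thesis
    unfolding gauged_remainder_def entries add.assoc residue_correction_vacuum[OF assms(1)] assms(2)
    by (simp add: msc_zero_right tri_conj_zero)
qed

lemma gauge_act_split:
  assumes "cmod (x*z) < 1" "z \<noteq> 0" "c \<noteq> 0"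
    and \<xi>: "\<xi> (mobius_cv c x z) l = msc (1 / mobius_cv c x z) (DelA t l) + R t (mobius_cv c x z) l"
  shows "gauge_act (pullback (mobius_cv c x) \<xi>) (\<lambda>z l. tri_gauge x z) z l
      = msc (1/z) (DelA t l) + gauged_remainder R c x t z l"
proof -
  have DelA: "DelA t l = mk2 0 (DelA t l $ 1 $ 2) (DelA t l $ 2 $ 1) 0"
    by (simp add: DelA_def)
  show ?thesis
    unfolding gauge_act_tri_gauge[OF assms(1)] \<xi> gauged_remainder_def msc_add_right tri_conj_add
    by (subst (1 2) DelA, subst tri_conj_residue_term[OF assms(2) one_plus_nonzero[OF assms(1)] assms(3)])
      (simp add: algebra_simps)
qed

lemma pert_delaunay_gauge_transform:
  assumes pert: "pert_delaunay \<xi> T \<epsilon> \<rho>" and "0 < \<epsilon>'" "c \<noteq> 0"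
    and small: "\<forall>z\<in>ball 0 \<epsilon>'. cmod (x*z) < 1 \<and> mobius_cv c x z \<in> ball 0 \<epsilon>"
  shows "pert_delaunay (\<lambda>t. gauge_act (pullback (mobius_cv c x) (\<xi> t)) (\<lambda>z l. tri_gauge x z)) T \<epsilon>' \<rho>"
proof -
  obtain R where R: "C2_on (\<lambda>(t, z, l). R t z l) ({-T<..<T} \<times> ball 0 \<epsilon> \<times> annulus \<rho>)"
     and R0: "\<forall>z\<in>ball 0 \<epsilon>. \<forall>l\<in>annulus \<rho>. R 0 z l = 0"
     and \<xi>: "\<forall>t\<in>{-T<..<T}. \<forall>z\<in>ball 0 \<epsilon> - {0}. \<forall>l\<in>annulus \<rho>. \<xi> t z l = msc (1 / z) (DelA t l) + R t z l"
    using pert unfolding pert_delaunay_def by blast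
  have T: "0 < T" "T \<le> 1/16" and "1 < \<rho>"
    using pert unfolding pert_delaunay_def by auto
  have cv_nonzero: "mobius_cv c x z \<noteq> 0" if "z \<in> ball 0 \<epsilon>'" "z \<noteq> 0" for z
    using that small one_plus_nonzero assms(3) by (auto simp: mobius_cv_def)
  have C2: "C2_on (\<lambda>(t, z, l). gauged_remainder R c x t z l) ({-T<..<T} \<times> ball 0 \<epsilon>' \<times> annulus \<rho>)"
    by (rule C2_on_gauged_remainder[OF R]) (use small T zero_notin_annulus in
      \<open>auto intro!: open_Times open_annulus\<close>)
  have vacuum: "gauged_remainder R c x 0 z l = 0" if "z \<in> ball 0 \<epsilon>'" "l \<in> annulus \<rho>" for z l
    using that small R0 one_plus_nonzero by (intro gauged_remainder_vacuum) auto
  have split: "gauge_act (pullback (mobius_cv c x) (\<xi> t)) (\<lambda>z l. tri_gauge x z) z l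
      = msc (1/z) (DelA t l) + gauged_remainder R c x t z l"
    if "t \<in> {-T<..<T}" "z \<in> ball 0 \<epsilon>' - {0}" "l \<in> annulus \<rho>" for t z l
    using that small cv_nonzero \<xi> assms(3) by (intro gauge_act_split) auto
  have DPW: "DPW_pot (gauge_act (pullback (mobius_cv c x) (\<xi> t)) (\<lambda>z l. tri_gauge x z)) (ball 0 \<epsilon>' - {0}) \<rho>"
    if "t \<in> {-T<..<T}" for t
    using pert that small cv_nonzero unfolding pert_delaunay_def
    by (intro DPW_pot_gauge_transform[where \<Omega>="ball 0 \<epsilon> - {0}"]) auto
  show ?thesis
    unfolding pert_delaunay_def using C2 vacuum split DPW T \<open>0 < \<epsilon>'\<close> \<open>1 < \<rho>\<close> by blast
qed

lemma mobius_cv_small_ball: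
  assumes "0 < \<epsilon>"
  obtains \<epsilon>' where "0 < \<epsilon>'" "\<forall>z\<in>ball 0 \<epsilon>'. cmod (x*z) < 1 \<and> mobius_cv c x z \<in> ball 0 \<epsilon>"
proof -
  have "continuous (at 0) (\<lambda>z. x*z)" by (intro continuous_intros)
  then obtain d1 where d1: "0 < d1" "\<And>z::complex. dist z 0 < d1 \<Longrightarrow> dist (x*z) (x*0) < 1"
    unfolding continuous_at_eps_delta using zero_less_one by blast
  have "continuous (at 0) (mobius_cv c x)" unfolding mobius_cv_def by (intro continuous_intros) simp
  then obtain d2 where d2: "0 < d2" "\<And>z::complex. dist z 0 < d2 \<Longrightarrow> dist (mobius_cv c x z) (mobius_cv c x 0) < \<epsilon>"
    unfolding continuous_at_eps_delta using assms by blast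
  show ?thesis
  proof (rule that[of "min d1 d2"])
    show "0 < min d1 d2" using d1(1) d2(1) by simp
    show "\<forall>z\<in>ball 0 (min d1 d2). cmod (x*z) < 1 \<and> mobius_cv c x z \<in> ball 0 \<epsilon>"
    proof
      fix z :: complex assume "z \<in> ball 0 (min d1 d2)"
      then have "dist z 0 < d1" "dist z 0 < d2" by (simp_all add: dist_commute)
      then show "cmod (x*z) < 1 \<and> mobius_cv c x z \<in> ball 0 \<epsilon>"
        using d1(2) d2(2) by (simp add: mobius_cv_def dist_norm)
    qed
  qed
qed

lemma change_of_var_mobius_cv:
  assumes "c \<noteq> 0" "\<forall>z\<in>ball 0 \<epsilon>'. cmod (x*z) < 1 \<and> mobius_cv c x z \<in> ball 0 \<epsilon>"
  shows "change_of_var (mobius_cv c x) \<epsilon>' \<epsilon>"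
  unfolding change_of_var_def
proof (intro conjI)
  show "mobius_cv c x holomorphic_on ball 0 \<epsilon>'"
    by (rule holomorphic_on_subset[OF mobius_cv_holomorphic]) (use assms(2) in auto)
  show "inj_on (mobius_cv c x) (ball 0 \<epsilon>')"
  proof (rule inj_onI)
    fix z1 z2 assume "z1 \<in> ball 0 \<epsilon>'" "z2 \<in> ball 0 \<epsilon>'" "mobius_cv c x z1 = mobius_cv c x z2"
    then have "c * z1 * (1 + x*z2) = c * z2 * (1 + x*z1)"
      using assms(2) one_plus_nonzero by (simp add: mobius_cv_def field_simps)
    then show "z1 = z2" using assms(1) by (simp add: algebra_simps)
  qed
qed (use assms(2) in \<open>auto simp: mobius_cv_def\<close>)

lemma is_lift_mobius_cv:
  assumes "b \<noteq> 0" "0 < \<epsilon>'" "0 < \<epsilon>"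
    and small: "\<forall>z\<in>ball 0 \<epsilon>'. cmod (x*z) < 1 \<and> mobius_cv (b^2) x z \<in> ball 0 \<epsilon>"
  shows "is_lift (\<lambda>w. w + 2 * Ln b - Ln (1 + x * exp w)) (mobius_cv (b^2) x) \<epsilon>' \<epsilon>"
proof -
  have logdisk: "w \<in> logdisk e \<longleftrightarrow> cmod (exp w) < e" if "0 < e" for w e
    using that by (simp add: logdisk_def) (metis exp_less_cancel_iff exp_ln)
  have exp_in: "exp w \<in> ball 0 \<epsilon>'" if "w \<in> logdisk \<epsilon>'" for w
    using that logdisk assms(2) by simp
  have lift: "exp (w + 2 * Ln b - Ln (1 + x * exp w)) = mobius_cv (b^2) x (exp w)" if "w \<in> logdisk \<epsilon>'" for w
  proof -
    have "1 + x * exp w \<noteq> 0" using one_plus_nonzero small exp_in[OF that] by blast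
    have "exp (w + 2 * Ln b - Ln (1 + x * exp w)) = exp w * exp (Ln b)^2 / exp (Ln (1 + x * exp w))"
      by (simp add: exp_diff exp_add exp_double)
    also have "\<dots> = exp w * b^2 / (1 + x * exp w)"
      using \<open>1 + x * exp w \<noteq> 0\<close> assms(1) by simp
    finally show ?thesis by (simp add: mobius_cv_def mult.commute)
  qed
  have "w + 2 * Ln b - Ln (1 + x * exp w) \<in> logdisk \<epsilon>" if "w \<in> logdisk \<epsilon>'" for w
    unfolding logdisk[OF assms(3)] lift[OF that] using small exp_in[OF that] by simp
  moreover have "(\<lambda>w. w + 2 * Ln b - Ln (1 + x * exp w)) holomorphic_on logdisk \<epsilon>'"
    using exp_in small one_plus_notin_nonpos_Reals by (intro holomorphic_intros) auto
  ultimately show ?thesis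
    unfolding is_lift_def using lift by blast
qed

lemma is_gauge_tri_gauge:
  assumes "1 < \<rho>" "\<forall>z\<in>ball 0 \<epsilon>'. cmod (x*z) < 1"
  shows "is_gauge (\<lambda>z l. tri_gauge x z) \<epsilon>' \<rho>"
proof -
  have "csqrt (1 + x*z) \<noteq> 0" if "z \<in> ball 0 \<epsilon>'" for z
    using assms(2) that one_plus_nonzero by simp
  then show ?thesis
    unfolding is_gauge_def tri_gauge_def
    using assms one_plus_notin_nonpos_Reals
    by (auto intro!: mholo_mk2 holomorphic_intros mholo_const simp: det_mk2)
qed

section \<open>The vacuum solution\<close>

definition A0 :: cmat where
  "A0 = mk2 0 (1/2) (1/2) 0"

definition hyp_mat :: "complex \<Rightarrow> cmat" where
  "hyp_mat e = mk2 ((e + 1/e)/2) ((e - 1/e)/2) ((e - 1/e)/2) ((e + 1/e)/2)"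

text \<open>\<open>exp_A0 w\<close> is the matrix exponential \<open>exp (w A0)\<close>.\<close>
definition exp_A0 :: "complex \<Rightarrow> cmat" where
  "exp_A0 w = hyp_mat (exp (w/2))"

lemma DelA_0: "DelA 0 l = A0"
  by (simp add: DelA_def A0_def rD_def sD_def)

lemma exp_A0_0: "exp_A0 0 = mat 1"
  by (simp add: exp_A0_def hyp_mat_def mat1_eq_mk2)

lemma exp_A0_minus_mult: "exp_A0 (-w) ** exp_A0 w = mat 1"
proof -
  have "exp (-w/2) = 1 / exp (w/2)" by (simp add: exp_minus inverse_eq_divide)
  then show ?thesis
    by (simp add: exp_A0_def hyp_mat_def mk2_mult mat1_eq_mk2 mk2_eq_iff) (simp add: field_simps)
qed

lemma det_exp_A0: "det (exp_A0 w) = 1"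
  by (simp add: exp_A0_def hyp_mat_def det_mk2) (simp add: field_simps)

lemma mhas_deriv_mult:
  assumes "mhas_deriv f Df w" "mhas_deriv g Dg w"
  shows "mhas_deriv (\<lambda>w. f w ** g w) (Df ** g w + f w ** Dg) w"
  unfolding mhas_deriv_def
proof (intro allI)
  fix i j
  have fi: "((\<lambda>y. f y$i$j) has_field_derivative Df$i$j) (at w)" for i j
    using assms(1) by (simp add: mhas_deriv_def)
  have gi: "((\<lambda>y. g y$i$j) has_field_derivative Dg$i$j) (at w)" for i j
    using assms(2) by (simp add: mhas_deriv_def)
  have "((\<lambda>y. f y $ i $ k * g y $ k $ j) has_field_derivative
      (Df $ i $ k * g w $ k $ j + f w $ i $ k * Dg $ k $ j)) (at w)" for k
    using DERIV_mult[OF fi gi] by (simp add: algebra_simps)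
  from DERIV_add[OF this[of 1] this[of 2]]
  show "((\<lambda>y. (f y ** g y) $ i $ j) has_field_derivative (Df ** g w + f w ** Dg) $ i $ j) (at w)"
    by (simp add: matrix_matrix_mult_def sum_2 algebra_simps)
qed

lemma mhas_deriv_exp_A0: "mhas_deriv exp_A0 (exp_A0 w ** A0) w"
proof -
  define e where "e = exp (w/2)"
  have de: "((\<lambda>w. exp (w/2)) has_field_derivative e/2) (at w)"
    unfolding e_def by (auto intro!: derivative_eq_intros)
  have di: "((\<lambda>w. 1 / exp (w/2)) has_field_derivative - (1/e)/2) (at w)"
    unfolding e_def by (auto intro!: derivative_eq_intros simp: field_simps exp_minus)
  have "((\<lambda>w. (exp (w/2) + 1 / exp (w/2))/2) has_field_derivative ((e - 1/e)/2)/2) (at w)"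
    using DERIV_cdivide[OF DERIV_add[OF de di], of 2] by (simp add: field_simps)
  moreover have "((\<lambda>w. (exp (w/2) - 1 / exp (w/2))/2) has_field_derivative ((e + 1/e)/2)/2) (at w)"
    using DERIV_cdivide[OF DERIV_diff[OF de di], of 2] by (simp add: field_simps)
  moreover have "exp_A0 w ** A0 = mk2 (((e - 1/e)/2)/2) (((e + 1/e)/2)/2) (((e + 1/e)/2)/2) (((e - 1/e)/2)/2)"
    by (simp add: exp_A0_def hyp_mat_def A0_def mk2_mult e_def)
  ultimately show ?thesis
    unfolding mhas_deriv_def by (simp add: exp_A0_def hyp_mat_def forall_2)
qed

lemma mhas_deriv_exp_A0_minus: "mhas_deriv (\<lambda>w. exp_A0 (-w)) (- (A0 ** exp_A0 (-w))) w"
  unfolding mhas_deriv_def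
proof (intro allI)
  fix i j
  have "((\<lambda>y. exp_A0 y $ i $ j) has_field_derivative (exp_A0 (-w) ** A0) $ i $ j) (at (-w))"
    using mhas_deriv_exp_A0 by (simp add: mhas_deriv_def)
  from DERIV_chain2[OF this DERIV_minus[OF DERIV_ident]]
  have "((\<lambda>y. exp_A0 (-y) $ i $ j) has_field_derivative (exp_A0 (-w) ** A0) $ i $ j * (-1)) (at w)"
    by simp
  moreover have "exp_A0 (-w) ** A0 = A0 ** exp_A0 (-w)"
    by (simp add: exp_A0_def hyp_mat_def A0_def mk2_mult mk2_eq_iff)
  ultimately show "((\<lambda>y. exp_A0 (-y) $ i $ j) has_field_derivative (- (A0 ** exp_A0 (-w))) $ i $ j) (at w)"
    by simp
qed

text \<open>\<open>\<Psi> w ** exp_A0 (-w)\<close> has derivative zero, hence is constant.\<close>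
lemma mhas_deriv_A0_unique:
  assumes "\<forall>w. mhas_deriv \<Psi> (\<Psi> w ** A0) w"
  shows "\<Psi> w = \<Psi> 0 ** exp_A0 w"
proof -
  define Y where "Y w = \<Psi> w ** exp_A0 (-w)" for w
  have "mhas_deriv Y (\<Psi> w ** A0 ** exp_A0 (-w) + \<Psi> w ** (- (A0 ** exp_A0 (-w)))) w" for w
    unfolding Y_def[abs_def] by (rule mhas_deriv_mult[OF assms[rule_format] mhas_deriv_exp_A0_minus])
  moreover have "\<Psi> w ** A0 ** exp_A0 (-w) + \<Psi> w ** (- (A0 ** exp_A0 (-w))) = 0" for w
    by (rule cmat_eqI) (simp_all add: matrix_matrix_mult_def sum_2 algebra_simps)
  ultimately have "\<forall>i j. ((\<lambda>y. Y y $ i $ j) has_field_derivative 0) (at w)" for w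
    by (simp add: mhas_deriv_def)
  then have "\<exists>k. \<forall>w\<in>UNIV. Y w $ i $ j = k" for i j
    by (intro has_field_derivative_zero_constant[of UNIV]) auto
  then have "Y w = Y 0" by (metis (no_types, lifting) UNIV_I cmat_eqI)
  then have "Y w = \<Psi> 0" by (simp add: Y_def exp_A0_0)
  have "\<Psi> w = \<Psi> w ** (exp_A0 (-w) ** exp_A0 w)" by (simp add: exp_A0_minus_mult)
  also have "\<dots> = Y w ** exp_A0 w" by (simp add: Y_def matrix_mul_assoc)
  finally show ?thesis using \<open>Y w = \<Psi> 0\<close> by simp
qed

lemma value_at_one_iff:
  "value_at_one \<Phi> L \<rho> (\<lambda>_. C) \<longleftrightarrow> (\<forall>l\<in>annulus \<rho>. \<forall>w\<in>L. \<Phi> w l = C ** exp_A0 w)"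
proof
  assume "value_at_one \<Phi> L \<rho> (\<lambda>_. C)"
  then obtain \<Psi> where \<Psi>: "\<forall>l\<in>annulus \<rho>. (\<forall>w. mhas_deriv (\<lambda>w. \<Psi> w l) (\<Psi> w l ** A0) w) \<and>
      (\<forall>w\<in>L. \<Psi> w l = \<Phi> w l) \<and> \<Psi> 0 l = C"
    unfolding value_at_one_def DelA_0 by blast
  then show "\<forall>l\<in>annulus \<rho>. \<forall>w\<in>L. \<Phi> w l = C ** exp_A0 w"
    using mhas_deriv_A0_unique by metis
next
  assume "\<forall>l\<in>annulus \<rho>. \<forall>w\<in>L. \<Phi> w l = C ** exp_A0 w"
  moreover have "mhas_deriv (\<lambda>w. C ** exp_A0 w) (C ** exp_A0 w ** A0) w" for w
    using mhas_deriv_mult[OF _ mhas_deriv_exp_A0, of "\<lambda>_. C" 0] by (simp add: mhas_deriv_def matrix_mul_assoc)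
  ultimately show "value_at_one \<Phi> L \<rho> (\<lambda>_. C)"
    unfolding value_at_one_def DelA_0 by (intro exI[of _ "\<lambda>w l. C ** exp_A0 w"]) (simp add: exp_A0_0)
qed

lemma value_at_one_det:
  assumes "sol_family \<xi> \<Phi> T \<epsilon> \<rho>" "0 < T" "0 < \<epsilon>" "1 < \<rho>" "value_at_one (\<Phi> 0) (logdisk \<epsilon>) \<rho> (\<lambda>_. C)"
  shows "det C = 1"
proof -
  have l: "1 \<in> annulus \<rho>" and w: "of_real (ln \<epsilon> - 1) \<in> logdisk \<epsilon>"
    using assms(4) by (simp_all add: annulus_def logdisk_def)
  then have "det (\<Phi> 0 (of_real (ln \<epsilon> - 1)) 1) = 1"
    using assms(1,2) unfolding sol_family_def by auto
  then show ?thesis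
    using assms(5) l w by (simp add: value_at_one_iff det_mul det_exp_A0)
qed

section \<open>The unitary factor of a constant matrix\<close>

definition pos_upper_triangular :: "cmat \<Rightarrow> bool" where
  "pos_upper_triangular B \<longleftrightarrow> B $ 2 $ 1 = 0 \<and> Im (B $ 1 $ 1) = 0 \<and> 0 < Re (B $ 1 $ 1) \<and>
     Im (B $ 2 $ 2) = 0 \<and> 0 < Re (B $ 2 $ 2)"

text \<open>Gram--Schmidt applied to the first column of \<open>X\<close>.\<close>
definition qr_unitary :: "cmat \<Rightarrow> cmat" where
  "qr_unitary X = (let n = complex_of_real (sqrt (cmod (X$1$1)^2 + cmod (X$2$1)^2))
     in mk2 (X$1$1/n) (- cnj (X$2$1)/n) (X$2$1/n) (cnj (X$1$1)/n))"

lemma conj_transpose_mult: "conj_transpose ((A::cmat) ** B) = conj_transpose B ** conj_transpose A"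
  by (rule cmat_eqI) (simp_all add: conj_transpose_def matrix_matrix_mult_def sum_2 mult.commute)

lemma SU2_mult: assumes "A \<in> SU2" "B \<in> SU2" shows "A ** B \<in> SU2"
proof -
  have "A ** B ** conj_transpose (A ** B) = A ** (B ** conj_transpose B) ** conj_transpose A"
    by (simp add: conj_transpose_mult matrix_mul_assoc)
  also have "\<dots> = mat 1" using assms by (simp add: SU2_def)
  finally show ?thesis using assms by (simp add: SU2_def det_mul)
qed

lemma SU2_eq_mk2:
  assumes "Q \<in> SU2"
  shows "Q = mk2 (Q$1$1) (Q$1$2) (- cnj (Q$1$2)) (cnj (Q$1$1))" "cmod (Q$1$1)^2 + cmod (Q$1$2)^2 = 1"
proof -
  have r: "Q ** conj_transpose Q = mat 1" and d: "det Q = 1" using assms by (auto simp: SU2_def)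
  have "conj_transpose Q ** Q = mat 1" using r matrix_left_right_inverse by blast
  then have "conj_transpose Q = matrix_inv Q" by (rule matrix_inv_unique[OF r, symmetric])
  also have "\<dots> = mk2 (Q$2$2) (-Q$1$2) (-Q$2$1) (Q$1$1)"
    using d matrix_inv_mk2[of "Q$1$1" "Q$2$2" "Q$1$2" "Q$2$1"] cmat_eq_mk2[of Q, symmetric] by (simp add: det_2)
  finally have "cnj (Q$1$1) = Q$2$2" "cnj (Q$2$1) = - Q$1$2"
    by (simp_all add: conj_transpose_def mk2_eq_iff vec_eq_iff forall_2)
  then show "Q = mk2 (Q$1$1) (Q$1$2) (- cnj (Q$1$2)) (cnj (Q$1$1))"
    by (metis cmat_eq_mk2 complex_cnj_cnj complex_cnj_minus)
  have "(Q ** conj_transpose Q) $ 1 $ 1 = 1" using r by (simp add: mat_def)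
  then have "Q$1$1 * cnj (Q$1$1) + Q$1$2 * cnj (Q$1$2) = 1"
    by (simp add: matrix_matrix_mult_def sum_2 conj_transpose_def)
  then have "complex_of_real (cmod (Q$1$1)^2 + cmod (Q$1$2)^2) = 1"
    by (simp only: of_real_add complex_norm_square)
  then show "cmod (Q$1$1)^2 + cmod (Q$1$2)^2 = 1" using of_real_eq_1_iff by blast
qed

lemma qr_unitary_unique:
  assumes "Q \<in> SU2" "pos_upper_triangular B" "X = Q ** B"
  shows "Q = qr_unitary X"
proof -
  define q p where "q = Q$1$1" and "p = Q$1$2"
  have Q: "Q = mk2 q p (- cnj p) (cnj q)" and qp: "cmod q ^2 + cmod p ^2 = 1"
    using SU2_eq_mk2[OF assms(1)] by (simp_all add: q_def p_def)
  define \<beta> where "\<beta> = Re (B$1$1)"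
  have B: "B$1$1 = complex_of_real \<beta>" "0 < \<beta>" "B$2$1 = 0"
    using assms(2) by (simp_all add: pos_upper_triangular_def \<beta>_def complex_eq_iff)
  have col: "X$1$1 = q * \<beta>" "X$2$1 = - cnj p * \<beta>"
    using assms(3) by (simp_all add: Q matrix_matrix_mult_def sum_2 B)
  have "cmod (X$1$1)^2 + cmod (X$2$1)^2 = \<beta>^2 * (cmod q ^2 + cmod p ^2)"
    unfolding col by (simp add: norm_mult power_mult_distrib algebra_simps)
  then have "sqrt (cmod (X$1$1)^2 + cmod (X$2$1)^2) = \<beta>" using qp B(2) by simp
  then show ?thesis using B(2) by (simp add: qr_unitary_def Q col)
qed

lemma qr_unitary_factorization:
  assumes "det X = 1"
  shows "qr_unitary X \<in> SU2" "\<exists>B. pos_upper_triangular B \<and> X = qr_unitary X ** B"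
proof -
  define a c where "a = X$1$1" and "c = X$2$1"
  define n where "n = complex_of_real (sqrt (cmod a ^ 2 + cmod c ^ 2))"
  have det: "a * X$2$2 - X$1$2 * c = 1" using assms by (simp add: det_2 a_def c_def)
  then have col: "a \<noteq> 0 \<or> c \<noteq> 0" by auto
  then have N: "0 < cmod a ^ 2 + cmod c ^ 2" by (cases "a = 0") (auto intro: add_pos_nonneg)
  have n0: "n \<noteq> 0" "0 < Re n" "Im n = 0" "cnj n = n" using N col by (simp_all add: n_def)
  have "n * n = complex_of_real (cmod a ^ 2 + cmod c ^ 2)"
    using N by (simp add: n_def flip: of_real_mult)
  also have "\<dots> = a * cnj a + c * cnj c" by (simp only: of_real_add complex_norm_square)
  finally have nn: "n * n = a * cnj a + c * cnj c" .
  have Q: "qr_unitary X = mk2 (a/n) (- cnj c/n) (c/n) (cnj a/n)"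
    by (simp add: qr_unitary_def Let_def a_def c_def n_def)
  have "a/n * cnj (a/n) + c/n * cnj (c/n) = (a * cnj a + c * cnj c) / (n * n)"
    using n0 by (simp add: add_divide_distrib)
  also have "\<dots> = 1" using n0 by (simp flip: nn)
  finally have unit: "a/n * cnj (a/n) + c/n * cnj (c/n) = 1" .
  show "qr_unitary X \<in> SU2"
    using unit unfolding Q SU2_def
    by (simp add: conj_transpose_mk2 mk2_mult mat1_eq_mk2 det_mk2 algebra_simps n0(4))
  define B where "B = mk2 n ((cnj a * X$1$2 + cnj c * X$2$2)/n) 0 (1/n)"
  have "pos_upper_triangular B" using N col by (simp add: pos_upper_triangular_def B_def n_def)
  moreover have "X = qr_unitary X ** B"
  proof (rule cmat_eqI)
    have "a * (cnj a * X$1$2 + cnj c * X$2$2) - cnj c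
        = X$1$2 * (a * cnj a + c * cnj c) + cnj c * (a * X$2$2 - X$1$2 * c - 1)"
      by (simp add: algebra_simps)
    then have "a * (cnj a * X$1$2 + cnj c * X$2$2) - cnj c = X$1$2 * (n * n)"
      using det nn by simp
    then show "X $ 1 $ 2 = (qr_unitary X ** B) $ 1 $ 2"
      using n0 by (simp add: Q B_def mk2_mult field_simps)
    have "c * (cnj a * X$1$2 + cnj c * X$2$2) + cnj a
        = X$2$2 * (a * cnj a + c * cnj c) - cnj a * (a * X$2$2 - X$1$2 * c - 1)"
      by (simp add: algebra_simps)
    then have "c * (cnj a * X$1$2 + cnj c * X$2$2) + cnj a = X$2$2 * (n * n)"
      using det nn by simp
    then show "X $ 2 $ 2 = (qr_unitary X ** B) $ 2 $ 2"
      using n0 by (simp add: Q B_def mk2_mult field_simps)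
  qed (use n0 in \<open>simp_all add: Q B_def mk2_mult a_def c_def\<close>)
  ultimately show "\<exists>B. pos_upper_triangular B \<and> X = qr_unitary X ** B" by blast
qed

lemma Uni_const_factorization:
  assumes "det X = 1"
  shows "Uni_const X \<in> SU2" "\<exists>B. pos_upper_triangular B \<and> X = Uni_const X ** B"
proof -
  have "Uni_const X = qr_unitary X"
    unfolding Uni_const_def
    using qr_unitary_factorization[OF assms] qr_unitary_unique
    by (intro the_equality) (auto simp: pos_upper_triangular_def)
  then show "Uni_const X \<in> SU2" "\<exists>B. pos_upper_triangular B \<and> X = Uni_const X ** B"
    using qr_unitary_factorization[OF assms] by simp_all
qed

lemma lower_left_zero_det_one:
  assumes "B $ 2 $ 1 = 0" "det B = 1"
  shows "B$1$1 \<noteq> 0" "B$2$2 = 1 / B$1$1" "B = mk2 (B$1$1) (B$1$2) 0 (1 / B$1$1)"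
proof -
  have "B$1$1 * B$2$2 = 1" using assms by (simp add: det_2)
  then show "B$1$1 \<noteq> 0" and "B$2$2 = 1 / B$1$1" by (auto simp: eq_divide_eq mult.commute)
  then show "B = mk2 (B$1$1) (B$1$2) 0 (1 / B$1$1)"
    using cmat_eq_mk2[of B] assms(1) by simp
qed

lemma Uni_const_triangular_factor:
  assumes "det X = 1"
  obtains b g where "b \<noteq> 0" "X = Uni_const X ** mk2 b g 0 (1/b)"
proof -
  obtain B where B: "pos_upper_triangular B" and XB: "X = Uni_const X ** B"
    using Uni_const_factorization(2)[OF assms] by blast
  have "det (Uni_const X) * det B = 1" using XB assms by (metis det_mul)
  then have "det B = 1" using Uni_const_factorization(1)[OF assms] by (simp add: SU2_def)
  then show ?thesis
    using that[of "B$1$1" "B$1$2"] lower_left_zero_det_one[of B] B XB by (simp add: pos_upper_triangular_def)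
qed

section \<open>Absorbing an upper triangular factor\<close>

definition inv_sqrt2 :: complex where
  "inv_sqrt2 = 1 / complex_of_real (sqrt 2)"

definition Hinv :: cmat where
  "Hinv = mk2 inv_sqrt2 (- inv_sqrt2) inv_sqrt2 inv_sqrt2"

lemma inv_sqrt2_square: "inv_sqrt2 * inv_sqrt2 = 1/2"
  by (simp add: inv_sqrt2_def flip: of_real_mult)

lemma Hmat_eq_mk2: "Hmat = mk2 inv_sqrt2 inv_sqrt2 (- inv_sqrt2) inv_sqrt2"
  by (simp add: Hmat_def inv_sqrt2_def msc_mk2)

lemma det_Hmat: "det Hmat = 1"
  by (simp add: Hmat_eq_mk2 det_mk2 inv_sqrt2_square)

lemma matrix_inv_Hmat: "matrix_inv Hmat = Hinv"
  using matrix_inv_mk2[of inv_sqrt2 inv_sqrt2 inv_sqrt2 "- inv_sqrt2"] inv_sqrt2_square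
  by (simp add: Hmat_eq_mk2 Hinv_def)

lemma Hmat_Hinv: "Hmat ** Hinv = mat 1"
  by (simp add: Hmat_eq_mk2 Hinv_def mk2_mult mat1_eq_mk2 inv_sqrt2_square)

lemma Hinv_SU2: "Hinv \<in> SU2"
proof -
  have "cnj inv_sqrt2 = inv_sqrt2" by (simp add: inv_sqrt2_def)
  then show ?thesis
    by (simp add: SU2_def Hinv_def conj_transpose_mk2 mk2_mult mat1_eq_mk2 det_mk2 inv_sqrt2_square)
qed

text \<open>\<open>Hmat\<close> diagonalises \<open>A0\<close>, so a constant upper triangular factor in front of the vacuum
  \<open>Hinv ** exp_A0 w\<close> is undone by a rescaling of \<open>e\<^sup>w\<close> (i.e. a Moebius change of variable)
  followed by the triangular gauge.\<close>
lemma upper_triangular_absorbed: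
  assumes "b \<noteq> 0" "1 + x * exp w \<noteq> 0" "x = - g * b"
  shows "mk2 b g 0 (1/b) ** Hinv ** exp_A0 (w + 2 * Ln b - Ln (1 + x * exp w)) ** tri_gauge x (exp w)
    = Hinv ** exp_A0 w"
proof -
  define e u a where "e = exp (w/2)" and "u = 1 + x * exp w" and "a = csqrt u"
  have nonzero: "e \<noteq> 0" "u \<noteq> 0" "a \<noteq> 0" using assms(2) by (simp_all add: e_def u_def a_def)
  have "exp w = e^2" by (simp add: e_def flip: exp_double)
  then have g: "g = (1 - a^2) / (b * e^2)"
    using nonzero assms(1) by (simp add: a_def u_def assms(3) field_simps)
  have "exp ((w + 2 * Ln b - Ln u) / 2) = e * exp (Ln b) / exp (Ln u / 2)"
    by (simp add: e_def add_divide_distrib diff_divide_distrib exp_add exp_diff)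
  also have "\<dots> = b * e / a" using nonzero assms(1) by (simp add: a_def csqrt_exp_Ln)
  finally have rescaled: "exp ((w + 2 * Ln b - Ln u) / 2) = b * e / a" .
  show ?thesis
    unfolding exp_A0_def tri_gauge_def u_def[symmetric] a_def[symmetric] e_def[symmetric] rescaled
    unfolding g Hinv_def hyp_mat_def mk2_mult mk2_eq_iff
    using nonzero assms(1) by (simp add: field_simps power2_eq_square)
qed

lemma gauge_away_upper_triangular:
  assumes pert: "pert_delaunay \<xi> T \<epsilon> \<rho>" and "b \<noteq> 0"
    and val: "value_at_one \<Phi>0 (logdisk \<epsilon>) \<rho> (\<lambda>_. Q ** mk2 b g 0 (1/b) ** Hinv)"
  shows "\<exists>\<epsilon>' h hl G. 0 < \<epsilon>' \<and> change_of_var h \<epsilon>' \<epsilon> \<and> is_lift hl h \<epsilon>' \<epsilon> \<and> is_gauge G \<epsilon>' \<rho> \<and>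
     pert_delaunay (\<lambda>t. gauge_act (pullback h (\<xi> t)) G) T \<epsilon>' \<rho> \<and>
     value_at_one (\<lambda>w l. \<Phi>0 (hl w) l ** G (exp w) l) (logdisk \<epsilon>') \<rho> (\<lambda>_. Q ** Hinv)"
proof -
  have "0 < \<epsilon>" "1 < \<rho>" using pert unfolding pert_delaunay_def by auto
  define x where "x = - g * b"
  obtain \<epsilon>' where "0 < \<epsilon>'" and small: "\<forall>z\<in>ball 0 \<epsilon>'. cmod (x*z) < 1 \<and> mobius_cv (b^2) x z \<in> ball 0 \<epsilon>"
    using mobius_cv_small_ball[OF \<open>0 < \<epsilon>\<close>] by blast
  define hl where "hl w = w + 2 * Ln b - Ln (1 + x * exp w)" for w
  have lift: "is_lift hl (mobius_cv (b^2) x) \<epsilon>' \<epsilon>"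
    unfolding hl_def[abs_def] using is_lift_mobius_cv[OF \<open>b \<noteq> 0\<close> \<open>0 < \<epsilon>'\<close> \<open>0 < \<epsilon>\<close> small] .
  have "value_at_one (\<lambda>w l. \<Phi>0 (hl w) l ** tri_gauge x (exp w)) (logdisk \<epsilon>') \<rho> (\<lambda>_. Q ** Hinv)"
    unfolding value_at_one_iff
  proof (intro ballI)
    fix l w assume l: "l \<in> annulus \<rho>" and w: "w \<in> logdisk \<epsilon>'"
    have "hl w \<in> logdisk \<epsilon>" and "exp w \<in> ball 0 \<epsilon>'"
      using lift w \<open>0 < \<epsilon>'\<close> by (auto simp: is_lift_def logdisk_def) (metis exp_less_cancel_iff exp_ln)
    then have "1 + x * exp w \<noteq> 0" and "\<Phi>0 (hl w) l = Q ** mk2 b g 0 (1/b) ** Hinv ** exp_A0 (hl w)"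
      using small one_plus_nonzero val l by (auto simp: value_at_one_iff)
    then have "\<Phi>0 (hl w) l ** tri_gauge x (exp w)
        = Q ** (mk2 b g 0 (1/b) ** Hinv ** exp_A0 (hl w) ** tri_gauge x (exp w))"
      by (simp add: matrix_mul_assoc)
    also have "\<dots> = Q ** (Hinv ** exp_A0 w)"
      using upper_triangular_absorbed[OF \<open>b \<noteq> 0\<close> \<open>1 + x * exp w \<noteq> 0\<close> x_def] by (simp add: hl_def)
    finally show "\<Phi>0 (hl w) l ** tri_gauge x (exp w) = Q ** Hinv ** exp_A0 w"
      by (simp add: matrix_mul_assoc)
  qed
  moreover have "b^2 \<noteq> 0" using \<open>b \<noteq> 0\<close> by simp
  ultimately show ?thesis
    using \<open>0 < \<epsilon>'\<close> lift change_of_var_mobius_cv[OF _ small] is_gauge_tri_gauge[OF \<open>1 < \<rho>\<close>] small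
      pert_delaunay_gauge_transform[OF pert \<open>0 < \<epsilon>'\<close> _ small]
    by blast
qed

theorem lemma2:
  fixes \<xi> \<Phi> :: "real \<Rightarrow> complex \<Rightarrow> complex \<Rightarrow> cmat"
    and T \<epsilon> \<rho> :: real and C0 :: cmat
  assumes "pert_delaunay \<xi> T \<epsilon> \<rho>"
    and "sol_family \<xi> \<Phi> T \<epsilon> \<rho>"
    and "\<forall>t\<in>{-T<..<T}. monodromy_problem (\<Phi> t) \<epsilon> \<rho>"
    and "value_at_one (\<Phi> 0) (logdisk \<epsilon>) \<rho> (\<lambda>_. C0)"
  shows "\<exists>T' \<epsilon>' \<rho>' h hl G.
     0 < T' \<and> T' \<le> T \<and> 0 < \<epsilon>' \<and> 1 < \<rho>' \<and> \<rho>' \<le> \<rho> \<and>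
     change_of_var h \<epsilon>' \<epsilon> \<and> is_lift hl h \<epsilon>' \<epsilon> \<and> is_gauge G \<epsilon>' \<rho>' \<and>
     pert_delaunay (\<lambda>t. gauge_act (pullback h (\<xi> t)) G) T' \<epsilon>' \<rho>' \<and>
     value_at_one (\<lambda>w l. \<Phi> 0 (hl w) l ** G (exp w) l) (logdisk \<epsilon>') \<rho>'
        (\<lambda>_. Uni_const (C0 ** Hmat) ** matrix_inv Hmat) \<and>
     Uni_const (C0 ** Hmat) ** matrix_inv Hmat \<in> SU2"
proof -
  define Q where "Q = Uni_const (C0 ** Hmat)"
  have "0 < T" "0 < \<epsilon>" "1 < \<rho>" using assms(1) unfolding pert_delaunay_def by auto
  then have "det (C0 ** Hmat) = 1"
    using value_at_one_det[OF assms(2) _ _ _ assms(4)] by (simp add: det_mul det_Hmat)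
  then obtain b g where "b \<noteq> 0" and QB: "C0 ** Hmat = Q ** mk2 b g 0 (1/b)"
    using Uni_const_triangular_factor unfolding Q_def by blast
  have "C0 = (C0 ** Hmat) ** Hinv" by (metis Hmat_Hinv matrix_mul_assoc matrix_mul_rid)
  then have "value_at_one (\<Phi> 0) (logdisk \<epsilon>) \<rho> (\<lambda>_. Q ** mk2 b g 0 (1/b) ** Hinv)"
    using assms(4) unfolding QB by simp
  then obtain \<epsilon>' h hl G where normalised: "0 < \<epsilon>'" "change_of_var h \<epsilon>' \<epsilon>" "is_lift hl h \<epsilon>' \<epsilon>"
    "is_gauge G \<epsilon>' \<rho>" "pert_delaunay (\<lambda>t. gauge_act (pullback h (\<xi> t)) G) T \<epsilon>' \<rho>"
    "value_at_one (\<lambda>w l. \<Phi> 0 (hl w) l ** G (exp w) l) (logdisk \<epsilon>') \<rho> (\<lambda>_. Q ** Hinv)"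
    using gauge_away_upper_triangular[OF assms(1) \<open>b \<noteq> 0\<close>] by blast
  have "Uni_const (C0 ** Hmat) ** matrix_inv Hmat = Q ** Hinv"
    by (simp add: Q_def matrix_inv_Hmat)
  moreover have "Q ** Hinv \<in> SU2"
    unfolding Q_def by (rule SU2_mult[OF Uni_const_factorization(1) Hinv_SU2]) fact
  ultimately show ?thesis
    using normalised \<open>0 < T\<close> \<open>1 < \<rho>\<close>
    by (intro exI[of _ T] exI[of _ \<epsilon>'] exI[of _ \<rho>] exI[of _ h] exI[of _ hl] exI[of _ G]) simp
qed

end
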